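(* Let $\mathbb F$ be an algebraically closed field of characteristic $p\neq 2$, let $S=\{R_0,\dots,R_d\}$ be a quasi-thin scheme on $X$ with $\mathcal A_2=\{a\in\{0,\dots,d\}:k_a=2\}\neq\varnothing$, let $x\in X$ and $\mathcal T=\mathcal T(x)$. Define the relation $\sim$ on $\mathcal A_2$ by $b\sim c$ if and only if $|R_{b'}R_c|=2$ or $(b,c)$ is a bad pair of $S$ (this is an equivalence relation), and let $\mathcal C_0,\dots,\mathcal C_\gamma$ be its distinct equivalence classes. Then $\mathcal T\cong M_{d+1}(\mathbb F)\oplus\bigoplus_{a=0}^{\gamma}M_{|\mathcal C_a|}(\mathbb F)$ as $\mathbb F$-algebras, where $M_n(\mathbb F)$ is the algebra of $n\times n$ matrices over $\mathbb F$.
   Context: Let $X$ be a nonempty finite set. A scheme of class $d$ on $X$ is a partition $S=\{R_0,\dots,R_d\}$ of $X\times X$ into nonempty sets such that $R_0=\{(b,b):b\in X\}$; for each $c$ there is $c'$ with $R_{c'}=\{(f,e):(e,f)\in R_c\}$; and for all $i,j,k$ the intersection number $p_{ij}^k=|\{\ell\in X:(m,\ell)\in R_i,(\ell,n)\in R_j\}|$ does not depend on $(m,n)\in R_k$. The valency is $k_a=p_{aa'}^0$; quasi-thin means all $k_a\le 2$; complex product $R_aR_b=\{R_c:p_{ab}^c>0\}$. For $y\in X$, $yR_a=\{z:(y,z)\in R_a\}$; $A_a\in M_X(\mathbb F)$ is the $(0,1)$ adjacency matrix of $R_a$, $E_a^*(y)$ is the diagonal $(0,1)$-matrix with ones exactly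 at positions indexed by $yR_a$, and $\mathcal T(y)$ is the $\mathbb F$-subalgebra of $M_X(\mathbb F)$ generated by $A_0,\dots,A_d,E_0^*(y),\dots,E_d^*(y)$. Bad pair: $(u,v)$ is a bad pair of $S$ if there exist an integer $a\ge1$ and $R_{i_b},R_{j_b},R_{\ell_b}\in S$ ($b=0,\dots,a$) with $i_0=u$, $\ell_a=v$, $k_{i_b}=k_{\ell_b}=2$ and $p_{i_bj_b}^{\ell_b}=1$ for all $b$, $\ell_c=i_{c+1}$ for $0\le c\le a-1$, and $|R_{u'}R_v|=1$. *)

theory Defs
  imports "HOL-Computational_Algebra.Polynomial"
begin

definition alg_closed_field :: "'f::field itself \<Rightarrow> bool" where
  "alg_closed_field _ \<longleftrightarrow> (\<forall>q::'f poly. degree q > 0 \<longrightarrow> (\<exists>z. poly q z = 0))"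

definition int_num_at :: "'a set \<Rightarrow> (nat \<Rightarrow> ('a \<times> 'a) set) \<Rightarrow> nat \<Rightarrow> nat \<Rightarrow> 'a \<Rightarrow> 'a \<Rightarrow> nat" where
  "int_num_at X R i j m n = card {l \<in> X. (m, l) \<in> R i \<and> (l, n) \<in> R j}"

definition is_scheme :: "'a set \<Rightarrow> nat \<Rightarrow> (nat \<Rightarrow> ('a \<times> 'a) set) \<Rightarrow> bool" where
  "is_scheme X d R \<longleftrightarrow>
     finite X \<and> X \<noteq> {} \<and>
     (\<forall>i\<le>d. R i \<noteq> {}) \<and>
     (\<forall>i\<le>d. \<forall>j\<le>d. i \<noteq> j \<longrightarrow> R i \<inter> R j = {}) \<and>
     (\<Union>i\<le>d. R i) = X \<times> X \<and>
     R 0 = {(b, b) | b. b \<in> X} \<and>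
     (\<forall>c\<le>d. \<exists>c'\<le>d. R c' = {(f, e). (e, f) \<in> R c}) \<and>
     (\<forall>i\<le>d. \<forall>j\<le>d. \<forall>k\<le>d. \<forall>m n m2 n2. (m, n) \<in> R k \<longrightarrow> (m2, n2) \<in> R k \<longrightarrow>
        int_num_at X R i j m n = int_num_at X R i j m2 n2)"

text \<open>Intersection number p_{ij}^k (evaluated at some pair of R k).\<close>
definition int_num :: "'a set \<Rightarrow> (nat \<Rightarrow> ('a \<times> 'a) set) \<Rightarrow> nat \<Rightarrow> nat \<Rightarrow> nat \<Rightarrow> nat" where
  "int_num X R i j k = (let (m, n) = (SOME mn. mn \<in> R k) in int_num_at X R i j m n)"

definition conj_idx :: "nat \<Rightarrow> (nat \<Rightarrow> ('a \<times> 'a) set) \<Rightarrow> nat \<Rightarrow> nat" where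
  "conj_idx d R c = (THE c'. c' \<le> d \<and> R c' = {(f, e). (e, f) \<in> R c})"

definition valency :: "'a set \<Rightarrow> nat \<Rightarrow> (nat \<Rightarrow> ('a \<times> 'a) set) \<Rightarrow> nat \<Rightarrow> nat" where
  "valency X d R a = int_num X R a (conj_idx d R a) 0"

definition quasi_thin :: "'a set \<Rightarrow> nat \<Rightarrow> (nat \<Rightarrow> ('a \<times> 'a) set) \<Rightarrow> bool" where
  "quasi_thin X d R \<longleftrightarrow> (\<forall>a\<le>d. valency X d R a \<le> 2)"

text \<open>Complex product R_a R_b, represented by the set of indices c with p_{ab}^c > 0
  (the relations R c are pairwise distinct, so this has the same cardinality).\<close>
definition cplx_prod :: "'a set \<Rightarrow> nat \<Rightarrow> (nat \<Rightarrow> ('a \<times> 'a) set) \<Rightarrow> nat \<Rightarrow> nat \<Rightarrow> nat set" where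
  "cplx_prod X d R a b = {c. c \<le> d \<and> int_num X R a b c > 0}"

definition bad_pair :: "'a set \<Rightarrow> nat \<Rightarrow> (nat \<Rightarrow> ('a \<times> 'a) set) \<Rightarrow> nat \<Rightarrow> nat \<Rightarrow> bool" where
  "bad_pair X d R u v \<longleftrightarrow>
     (\<exists>a::nat. a \<ge> 1 \<and> (\<exists>i j l :: nat \<Rightarrow> nat.
        (\<forall>b\<le>a. i b \<le> d \<and> j b \<le> d \<and> l b \<le> d) \<and>
        i 0 = u \<and> l a = v \<and>
        (\<forall>b\<le>a. valency X d R (i b) = 2 \<and> valency X d R (l b) = 2 \<and>
                int_num X R (i b) (j b) (l b) = 1) \<and>
        (\<forall>c<a. l c = i (Suc c)) \<and>
        card (cplx_prod X d R (conj_idx d R u) v) = 1))"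

definition A2 :: "'a set \<Rightarrow> nat \<Rightarrow> (nat \<Rightarrow> ('a \<times> 'a) set) \<Rightarrow> nat set" where
  "A2 X d R = {a. a \<le> d \<and> valency X d R a = 2}"

definition sim_rel :: "'a set \<Rightarrow> nat \<Rightarrow> (nat \<Rightarrow> ('a \<times> 'a) set) \<Rightarrow> nat rel" where
  "sim_rel X d R = {(b, c). b \<in> A2 X d R \<and> c \<in> A2 X d R \<and>
      (card (cplx_prod X d R (conj_idx d R b) c) = 2 \<or> bad_pair X d R b c)}"

type_synonym ('a, 'f) xmat = "'a \<Rightarrow> 'a \<Rightarrow> 'f"

definition xmat_mult :: "'a set \<Rightarrow> ('a, 'f::field) xmat \<Rightarrow> ('a, 'f) xmat \<Rightarrow> ('a, 'f) xmat" where
  "xmat_mult X A B = (\<lambda>y z. \<Sum>w\<in>X. A y w * B w z)"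

definition xmat_one :: "'a set \<Rightarrow> ('a, 'f::field) xmat" where
  "xmat_one X = (\<lambda>y z. if y \<in> X \<and> y = z then 1 else 0)"

definition adj_mat :: "(nat \<Rightarrow> ('a \<times> 'a) set) \<Rightarrow> nat \<Rightarrow> ('a, 'f::field) xmat" where
  "adj_mat R a = (\<lambda>y z. if (y, z) \<in> R a then 1 else 0)"

definition dual_idem :: "(nat \<Rightarrow> ('a \<times> 'a) set) \<Rightarrow> 'a \<Rightarrow> nat \<Rightarrow> ('a, 'f::field) xmat" where
  "dual_idem R x a = (\<lambda>y z. if y = z \<and> (x, y) \<in> R a then 1 else 0)"

inductive_set gen_alg :: "'a set \<Rightarrow> ('a, 'f::field) xmat set \<Rightarrow> ('a, 'f) xmat set"
  for X G where
    gen: "A \<in> G \<Longrightarrow> A \<in> gen_alg X G"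
  | one: "xmat_one X \<in> gen_alg X G"
  | zero: "(\<lambda>y z. 0) \<in> gen_alg X G"
  | add: "A \<in> gen_alg X G \<Longrightarrow> B \<in> gen_alg X G \<Longrightarrow> (\<lambda>y z. A y z + B y z) \<in> gen_alg X G"
  | smult: "A \<in> gen_alg X G \<Longrightarrow> (\<lambda>y z. c * A y z) \<in> gen_alg X G"
  | mult: "A \<in> gen_alg X G \<Longrightarrow> B \<in> gen_alg X G \<Longrightarrow> xmat_mult X A B \<in> gen_alg X G"

definition terwilliger_alg :: "'a set \<Rightarrow> nat \<Rightarrow> (nat \<Rightarrow> ('a \<times> 'a) set) \<Rightarrow> 'a \<Rightarrow> ('a, 'f::field) xmat set" where
  "terwilliger_alg X d R x =
     gen_alg X ((\<lambda>a. adj_mat R a) ` {..d} \<union> (\<lambda>a. dual_idem R x a) ` {..d})"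

text \<open>Direct sum of M_{n k}(F) over k in a finite index set I: families of matrices
  B k i j (block k, row i, column j), zero outside the blocks.\<close>
definition blocks_carrier :: "'i set \<Rightarrow> ('i \<Rightarrow> nat) \<Rightarrow> ('i \<Rightarrow> nat \<Rightarrow> nat \<Rightarrow> 'f::field) set" where
  "blocks_carrier I n = {B. \<forall>k i j. B k i j \<noteq> 0 \<longrightarrow> k \<in> I \<and> i < n k \<and> j < n k}"

definition blocks_mult :: "('i \<Rightarrow> nat) \<Rightarrow> ('i \<Rightarrow> nat \<Rightarrow> nat \<Rightarrow> 'f::field) \<Rightarrow> ('i \<Rightarrow> nat \<Rightarrow> nat \<Rightarrow> 'f) \<Rightarrow> ('i \<Rightarrow> nat \<Rightarrow> nat \<Rightarrow> 'f)" where
  "blocks_mult n B C = (\<lambda>k i j. \<Sum>l<n k. B k i l * C k l j)"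

definition blocks_one :: "'i set \<Rightarrow> ('i \<Rightarrow> nat) \<Rightarrow> ('i \<Rightarrow> nat \<Rightarrow> nat \<Rightarrow> 'f::field)" where
  "blocks_one I n = (\<lambda>k i j. if k \<in> I \<and> i < n k \<and> i = j then 1 else 0)"

definition alg_iso :: "'a set \<Rightarrow> ('a, 'f::field) xmat set \<Rightarrow> 'i set \<Rightarrow> ('i \<Rightarrow> nat)
    \<Rightarrow> (('a, 'f) xmat \<Rightarrow> ('i \<Rightarrow> nat \<Rightarrow> nat \<Rightarrow> 'f)) \<Rightarrow> bool" where
  "alg_iso X T I n \<phi> \<longleftrightarrow>
     bij_betw \<phi> T (blocks_carrier I n) \<and>
     (\<forall>A\<in>T. \<forall>B\<in>T. \<phi> (\<lambda>y z. A y z + B y z) = (\<lambda>k i j. \<phi> A k i j + \<phi> B k i j)) \<and>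
     (\<forall>A\<in>T. \<forall>c. \<phi> (\<lambda>y z. c * A y z) = (\<lambda>k i j. c * \<phi> A k i j)) \<and>
     (\<forall>A\<in>T. \<forall>B\<in>T. \<phi> (xmat_mult X A B) = blocks_mult n (\<phi> A) (\<phi> B)) \<and>
     \<phi> (xmat_one X) = blocks_one I n"

end

theory Submission
  imports Defs
begin

text \<open>
  For \<open>2 \<noteq> 0\<close> the standard module \<open>\<bbbF>\<^sup>X\<close> is the direct sum of \<open>W\<^sub>0\<close>, spanned by the
  characteristic vectors \<open>u\<^sub>a\<close> of the sets \<open>x R\<^sub>a\<close> (\<open>0 \<le> a \<le> d\<close>), and \<open>W\<^sub>1\<close>, spanned by the
  vectors \<open>v\<^sub>c = e\<^sub>y - e\<^sub>y\<^sub>'\<close> for \<open>x R\<^sub>c = {y, y'}\<close>, \<open>c \<in> A\<^sub>2\<close>. Counting with intersection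
  numbers shows that every generator of \<open>\<T>\<close> maps \<open>W\<^sub>0\<close> into \<open>W\<^sub>0\<close> and \<open>W\<^sub>1\<close> into \<open>W\<^sub>1\<close>,
  and that \<open>A\<^sub>b\<close> can only give \<open>v\<^sub>c\<close> a component along \<open>v\<^sub>a\<close> if \<open>p\<^sub>a\<^sub>b\<^sup>c = 1\<close>. Since
  \<open>|R\<^sub>b\<^sub>' R\<^sub>c| = 2\<close> forces such a link, \<open>\<sim>\<close> is the transitive closure of these links, and
  \<open>W\<^sub>1\<close> splits into the spans of the \<open>v\<^sub>c\<close> over the classes of \<open>\<sim>\<close>. Taking matrices with
  respect to these bases is thus an injective algebra map from \<open>\<T>\<close> to the block algebra.
  It is onto: \<open>E\<^sub>i\<^sup>* J E\<^sub>j\<^sup>*\<close> gives the matrix units of the first block, and for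
  \<open>p\<^sub>a\<^sub>b\<^sup>c = 1\<close> the element \<open>E\<^sub>a\<^sup>* A\<^sub>b E\<^sub>c\<^sup>* - (1/2) E\<^sub>a\<^sup>* J E\<^sub>c\<^sup>*\<close> sends \<open>v\<^sub>c\<close> to
  \<open>\<plusminus>v\<^sub>a\<close> and kills all other basis vectors, so products along chains of links give the
  matrix units of the other blocks.
\<close>

definition xmat_apply :: "'a set \<Rightarrow> ('a, 'f::field) xmat \<Rightarrow> ('a \<Rightarrow> 'f) \<Rightarrow> 'a \<Rightarrow> 'f" where
  "xmat_apply X M f = (\<lambda>y. \<Sum>w\<in>X. M y w * f w)"

lemma xmat_apply_mult: "xmat_apply X (xmat_mult X M K) f = xmat_apply X M (xmat_apply X K f)"
proof
  fix y
  have "xmat_apply X (xmat_mult X M K) f y = (\<Sum>w\<in>X. \<Sum>w'\<in>X. M y w' * K w' w * f w)"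
    unfolding xmat_apply_def xmat_mult_def by (simp add: sum_distrib_right)
  also have "\<dots> = (\<Sum>w'\<in>X. \<Sum>w\<in>X. M y w' * K w' w * f w)"
    by (rule sum.swap)
  also have "\<dots> = xmat_apply X M (xmat_apply X K f) y"
    unfolding xmat_apply_def by (simp add: sum_distrib_left mult.assoc)
  finally show "xmat_apply X (xmat_mult X M K) f y = xmat_apply X M (xmat_apply X K f) y" .
qed

lemma xmat_apply_add:
  "xmat_apply X (\<lambda>y z. M y z + K y z) f = (\<lambda>y. xmat_apply X M f y + xmat_apply X K f y)"
  unfolding xmat_apply_def by (simp add: distrib_right sum.distrib)

lemma xmat_apply_smult: "xmat_apply X (\<lambda>y z. c * M y z) f = (\<lambda>y. c * xmat_apply X M f y)"
  unfolding xmat_apply_def by (simp add: sum_distrib_left mult.assoc)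

lemma xmat_apply_lincomb_mat:
  "xmat_apply X (\<lambda>y z. \<Sum>t\<in>S. c t * F t y z) f = (\<lambda>y. \<Sum>t\<in>S. c t * xmat_apply X (F t) f y)"
proof
  fix y
  have "xmat_apply X (\<lambda>y z. \<Sum>t\<in>S. c t * F t y z) f y = (\<Sum>w\<in>X. \<Sum>t\<in>S. c t * F t y w * f w)"
    unfolding xmat_apply_def by (simp add: sum_distrib_right)
  also have "\<dots> = (\<Sum>t\<in>S. c t * xmat_apply X (F t) f y)"
    unfolding xmat_apply_def by (subst sum.swap) (simp add: sum_distrib_left mult.assoc)
  finally show "xmat_apply X (\<lambda>y z. \<Sum>t\<in>S. c t * F t y z) f y = (\<Sum>t\<in>S. c t * xmat_apply X (F t) f y)" .
qed

lemma xmat_apply_lincomb: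
  "xmat_apply X M (\<lambda>w. \<Sum>t\<in>S. c t * g t w) = (\<lambda>y. \<Sum>t\<in>S. c t * xmat_apply X M (g t) y)"
  unfolding xmat_apply_def sum_distrib_left
  by (simp add: sum.swap[of _ X] mult.left_commute)

lemma xmat_apply_scale: "xmat_apply X M (\<lambda>w. c * g w) = (\<lambda>y. c * xmat_apply X M g y)"
  unfolding xmat_apply_def by (simp add: sum_distrib_left mult.left_commute)

lemma xmat_apply_zero: "xmat_apply X M (\<lambda>w. 0) = (\<lambda>y. 0)"
  unfolding xmat_apply_def by simp

lemma xmat_apply_one:
  assumes "finite X" "\<And>y. y \<notin> X \<Longrightarrow> f y = 0"
  shows "xmat_apply X (xmat_one X) f = f"
proof
  fix y
  have "xmat_apply X (xmat_one X) f y = (\<Sum>w\<in>X. if w = y then f y else 0)"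
    unfolding xmat_apply_def xmat_one_def by (rule sum.cong) auto
  then show "xmat_apply X (xmat_one X) f y = f y"
    using assms by simp
qed

lemma sum_if_eq_card: "finite S \<Longrightarrow> (\<Sum>w\<in>S. if P w then 1 else 0) = of_nat (card {w \<in> S. P w})"
  by (simp add: of_bool_def[symmetric] Int_def conj_commute)

definition xmat_supported :: "'a set \<Rightarrow> ('a, 'f::field) xmat \<Rightarrow> bool" where
  "xmat_supported X M \<longleftrightarrow> (\<forall>y z. y \<notin> X \<or> z \<notin> X \<longrightarrow> M y z = 0)"

lemma xmat_apply_outside: "xmat_supported X M \<Longrightarrow> y \<notin> X \<Longrightarrow> xmat_apply X M f y = 0"
  unfolding xmat_supported_def xmat_apply_def by simp

lemma xmat_supported_mult:
  "xmat_supported X M \<Longrightarrow> xmat_supported X K \<Longrightarrow> xmat_supported X (xmat_mult X M K)"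
  unfolding xmat_supported_def xmat_mult_def by (metis (no_types, lifting) mult_eq_0_iff sum.neutral)

lemma gen_alg_lincomb:
  assumes "finite S" "\<And>t. t \<in> S \<Longrightarrow> F t \<in> gen_alg X G"
  shows "(\<lambda>y z. \<Sum>t\<in>S. c t * F t y z) \<in> gen_alg X G"
  using assms
proof (induction S rule: finite_induct)
  case empty
  then show ?case by (simp add: gen_alg.zero)
next
  case (insert t S)
  then have "(\<lambda>y z. c t * F t y z + (\<Sum>t\<in>S. c t * F t y z)) \<in> gen_alg X G"
    by (simp add: gen_alg.add gen_alg.smult)
  then show ?case using insert by simp
qed

lemma inj_on_gen_alg:
  fixes f :: "('a, 'f::field) xmat \<Rightarrow> 'b \<Rightarrow> nat \<Rightarrow> nat \<Rightarrow> 'f"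
  assumes add: "\<And>M K. f (\<lambda>y z. M y z + K y z) = (\<lambda>k i j. f M k i j + f K k i j)"
    and smult: "\<And>M c. f (\<lambda>y z. c * M y z) = (\<lambda>k i j. c * f M k i j)"
    and kernel: "\<And>D. D \<in> gen_alg X G \<Longrightarrow> f D = (\<lambda>k i j. 0) \<Longrightarrow> D = (\<lambda>y z. 0)"
  shows "inj_on f (gen_alg X G)"
proof (rule inj_onI)
  fix M K assume M: "M \<in> gen_alg X G" and K: "K \<in> gen_alg X G" and eq: "f M = f K"
  define D where "D = (\<lambda>y z. M y z + (-1) * K y z)"
  have "D \<in> gen_alg X G"
    unfolding D_def by (intro gen_alg.add gen_alg.smult M K)
  moreover have "f D = (\<lambda>k i j. 0)"
    unfolding D_def add smult eq by simp
  ultimately have "D = (\<lambda>y z. 0)" by (rule kernel)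
  then show "M = K"
    unfolding D_def by (simp add: fun_eq_iff)
qed

definition block_positions :: "'i set \<Rightarrow> ('i \<Rightarrow> nat) \<Rightarrow> ('i \<times> nat \<times> nat) set" where
  "block_positions I n = (SIGMA k:I. {..<n k} \<times> {..<n k})"

definition block_unit :: "'i \<times> nat \<times> nat \<Rightarrow> 'i \<Rightarrow> nat \<Rightarrow> nat \<Rightarrow> 'f::field" where
  "block_unit t = (\<lambda>k i j. if (k, i, j) = t then 1 else 0)"

lemma blocks_carrier_eq_lincomb_units:
  assumes "finite I" "B \<in> blocks_carrier I n"
  shows "B = (\<lambda>k i j. \<Sum>t\<in>block_positions I n. (case t of (k', i', j') \<Rightarrow> B k' i' j') * block_unit t k i j)"
proof (intro ext)
  fix k i j
  have fin: "finite (block_positions I n)"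
    unfolding block_positions_def using assms(1) by blast
  have "(\<Sum>t\<in>block_positions I n. (case t of (k', i', j') \<Rightarrow> B k' i' j') * block_unit t k i j)
      = (\<Sum>t\<in>block_positions I n. if t = (k, i, j) then B k i j else 0)"
    unfolding block_unit_def by (rule sum.cong) auto
  also have "\<dots> = (if (k, i, j) \<in> block_positions I n then B k i j else 0)"
    using fin by simp
  also have "\<dots> = B k i j"
    using assms(2) unfolding blocks_carrier_def block_positions_def by auto
  finally show "B k i j = (\<Sum>t\<in>block_positions I n.
      (case t of (k', i', j') \<Rightarrow> B k' i' j') * block_unit t k i j)" by simp
qed

lemma blocks_carrier_subset_image:
  fixes f :: "('a, 'f::field) xmat \<Rightarrow> 'i \<Rightarrow> nat \<Rightarrow> nat \<Rightarrow> 'f"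
  assumes "finite I"
    and units: "\<And>t. t \<in> block_positions I n \<Longrightarrow> block_unit t \<in> f ` A"
    and closed: "\<And>(S :: ('i \<times> nat \<times> nat) set) c F. finite S \<Longrightarrow> (\<And>t. t \<in> S \<Longrightarrow> F t \<in> A) \<Longrightarrow>
        (\<lambda>y z. \<Sum>t\<in>S. c t * F t y z) \<in> A"
    and lincomb: "\<And>(S :: ('i \<times> nat \<times> nat) set) c F. finite S \<Longrightarrow> (\<And>t. t \<in> S \<Longrightarrow> F t \<in> A) \<Longrightarrow>
        f (\<lambda>y z. \<Sum>t\<in>S. c t * F t y z) = (\<lambda>k i j. \<Sum>t\<in>S. c t * f (F t) k i j)"
  shows "blocks_carrier I n \<subseteq> f ` A"
proof
  fix B :: "'i \<Rightarrow> nat \<Rightarrow> nat \<Rightarrow> 'f"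
  assume B: "B \<in> blocks_carrier I n"
  let ?P = "block_positions I n"
  let ?c = "\<lambda>t. case t of (k', i', j') \<Rightarrow> B k' i' j'"
  have fin: "finite ?P"
    unfolding block_positions_def using assms(1) by blast
  have "\<forall>t\<in>?P. \<exists>M. M \<in> A \<and> f M = block_unit t"
    using units by (metis imageE)
  then obtain F where F: "\<And>t. t \<in> ?P \<Longrightarrow> F t \<in> A \<and> f (F t) = block_unit t"
    by metis
  have "f (\<lambda>y z. \<Sum>t\<in>?P. ?c t * F t y z) = (\<lambda>k i j. \<Sum>t\<in>?P. ?c t * block_unit t k i j)"
    using lincomb[OF fin, of F ?c] F by simp
  also have "\<dots> = B"
    using blocks_carrier_eq_lincomb_units[OF assms(1) B] by simp
  finally have "B = f (\<lambda>y z. \<Sum>t\<in>?P. ?c t * F t y z)" ..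
  moreover have "(\<lambda>y z. \<Sum>t\<in>?P. ?c t * F t y z) \<in> A"
    using F by (intro closed[OF fin]) blast
  ultimately show "B \<in> f ` A" by (rule image_eqI)
qed

locale scheme =
  fixes X :: "'a set" and d :: nat and R :: "nat \<Rightarrow> ('a \<times> 'a) set"
  assumes is_scheme: "is_scheme X d R"
begin

lemma finite_X: "finite X"
  using is_scheme unfolding is_scheme_def by simp

lemma R_nonempty: "i \<le> d \<Longrightarrow> R i \<noteq> {}"
  using is_scheme unfolding is_scheme_def by simp

lemma R_Union: "(\<Union>i\<le>d. R i) = X \<times> X"
  using is_scheme unfolding is_scheme_def by simp

lemma R_disjoint: "i \<le> d \<Longrightarrow> j \<le> d \<Longrightarrow> i \<noteq> j \<Longrightarrow> R i \<inter> R j = {}"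
  using is_scheme unfolding is_scheme_def by simp

lemma R_0_iff: "(y, z) \<in> R 0 \<longleftrightarrow> y \<in> X \<and> z = y"
  using is_scheme unfolding is_scheme_def by auto

lemma converse_closed: "c \<le> d \<Longrightarrow> \<exists>c'\<le>d. R c' = {(f, e). (e, f) \<in> R c}"
  using is_scheme unfolding is_scheme_def by simp

lemma int_num_at_eq:
  assumes "i \<le> d" "j \<le> d" "k \<le> d" "(m, n) \<in> R k" "(m', n') \<in> R k"
  shows "int_num_at X R i j m n = int_num_at X R i j m' n'"
proof -
  have "\<forall>i\<le>d. \<forall>j\<le>d. \<forall>k\<le>d. \<forall>m n m' n'. (m, n) \<in> R k \<longrightarrow> (m', n') \<in> R k \<longrightarrow>
      int_num_at X R i j m n = int_num_at X R i j m' n'"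
    using is_scheme unfolding is_scheme_def by (elim conjE) assumption
  then show ?thesis
    using assms by blast
qed

lemma R_subset: "i \<le> d \<Longrightarrow> R i \<subseteq> X \<times> X"
  using R_Union by blast

lemma R_cover: "y \<in> X \<Longrightarrow> z \<in> X \<Longrightarrow> \<exists>i\<le>d. (y, z) \<in> R i"
  using R_Union by blast

lemma R_unique: "i \<le> d \<Longrightarrow> j \<le> d \<Longrightarrow> (y, z) \<in> R i \<Longrightarrow> (y, z) \<in> R j \<Longrightarrow> i = j"
  using R_disjoint by blast

lemma int_num_eq_int_num_at:
  assumes "k \<le> d" "(m, n) \<in> R k" "i \<le> d" "j \<le> d"
  shows "int_num X R i j k = int_num_at X R i j m n"
proof -
  obtain m' n' where mn': "(SOME mn. mn \<in> R k) = (m', n')"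
    by (cases "SOME mn. mn \<in> R k")
  have "(m', n') \<in> R k"
    using someI[of "\<lambda>mn. mn \<in> R k", OF assms(2)] mn' by simp
  then have "int_num_at X R i j m' n' = int_num_at X R i j m n"
    using assms by (intro int_num_at_eq)
  then show ?thesis
    unfolding int_num_def mn' by simp
qed

abbreviation cnv :: "nat \<Rightarrow> nat" where
  "cnv c \<equiv> conj_idx d R c"

lemma cnv_le_and_R_cnv:
  assumes "c \<le> d"
  shows "cnv c \<le> d \<and> R (cnv c) = {(f, e). (e, f) \<in> R c}"
proof -
  obtain c' where c': "c' \<le> d" "R c' = {(f, e). (e, f) \<in> R c}"
    using converse_closed[OF assms] by blast
  have unique: "c'' = c'" if "c'' \<le> d" "R c'' = {(f, e). (e, f) \<in> R c}" for c''
  proof (rule ccontr)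
    assume "c'' \<noteq> c'"
    then have "R c' = {}"
      using R_disjoint[OF that(1) c'(1)] that(2) c'(2) by simp
    then show False
      using R_nonempty[OF c'(1)] by contradiction
  qed
  have "cnv c = c'"
    unfolding conj_idx_def
  proof (rule the_equality)
    show "c' \<le> d \<and> R c' = {(f, e). (e, f) \<in> R c}"
      using c' by blast
  qed (use unique in blast)
  then show ?thesis
    using c' by simp
qed

lemma cnv_le: "c \<le> d \<Longrightarrow> cnv c \<le> d"
  using cnv_le_and_R_cnv by blast

lemma mem_R_cnv_iff: "c \<le> d \<Longrightarrow> (y, z) \<in> R (cnv c) \<longleftrightarrow> (z, y) \<in> R c"
  using cnv_le_and_R_cnv by blast

lemma int_num_pos_iff:
  assumes "k \<le> d" "(m, n) \<in> R k" "i \<le> d" "j \<le> d"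
  shows "int_num X R i j k > 0 \<longleftrightarrow> (\<exists>l. (m, l) \<in> R i \<and> (l, n) \<in> R j)"
proof -
  have "int_num X R i j k = card {l \<in> X. (m, l) \<in> R i \<and> (l, n) \<in> R j}"
    using int_num_eq_int_num_at[OF assms] unfolding int_num_at_def .
  moreover have "(m, l) \<in> R i \<Longrightarrow> l \<in> X" for l
    using R_subset[OF assms(3)] by blast
  ultimately show ?thesis
    using finite_X by (auto simp: card_gt_0_iff)
qed

end

locale pointed_scheme = scheme +
  fixes x :: 'a
  assumes x_in_X: "x \<in> X"
begin

definition nbhd :: "nat \<Rightarrow> 'a set" where
  "nbhd a = {y. (x, y) \<in> R a}"

lemma nbhd_subset: "a \<le> d \<Longrightarrow> nbhd a \<subseteq> X"
  unfolding nbhd_def using R_subset by blast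

lemma finite_nbhd: "a \<le> d \<Longrightarrow> finite (nbhd a)"
  using nbhd_subset finite_X finite_subset by blast

lemma nbhd_cover: "y \<in> X \<Longrightarrow> \<exists>a\<le>d. y \<in> nbhd a"
  unfolding nbhd_def using R_cover x_in_X by blast

lemma nbhd_unique: "a \<le> d \<Longrightarrow> b \<le> d \<Longrightarrow> y \<in> nbhd a \<Longrightarrow> y \<in> nbhd b \<Longrightarrow> a = b"
  unfolding nbhd_def using R_unique by blast

lemma card_nbhd_row:
  assumes "a \<le> d" "b \<le> d" "c \<le> d" "y \<in> nbhd a"
  shows "card {z \<in> nbhd c. (y, z) \<in> R b} = int_num X R c (cnv b) a"
proof -
  have "int_num X R c (cnv b) a = int_num_at X R c (cnv b) x y"
    using assms cnv_le unfolding nbhd_def by (intro int_num_eq_int_num_at) auto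
  also have "\<dots> = card {z \<in> nbhd c. (y, z) \<in> R b}"
    unfolding int_num_at_def nbhd_def using mem_R_cnv_iff[OF assms(2)] R_subset[OF assms(3)]
    by (intro arg_cong[where f = card]) auto
  finally show ?thesis by simp
qed

lemma card_nbhd_col:
  assumes "a \<le> d" "b \<le> d" "c \<le> d" "z \<in> nbhd c"
  shows "card {y \<in> nbhd a. (y, z) \<in> R b} = int_num X R a b c"
proof -
  have "int_num X R a b c = int_num_at X R a b x z"
    using assms unfolding nbhd_def by (intro int_num_eq_int_num_at) auto
  also have "\<dots> = card {y \<in> nbhd a. (y, z) \<in> R b}"
    unfolding int_num_at_def nbhd_def using R_subset[OF assms(1)]
    by (intro arg_cong[where f = card]) auto
  finally show ?thesis by simp
qed

lemma valency_eq_card_nbhd: "a \<le> d \<Longrightarrow> valency X d R a = card (nbhd a)"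
  using card_nbhd_row[of 0 a a x] x_in_X R_0_iff R_subset
  unfolding valency_def nbhd_def by fastforce

lemma nbhd_nonempty:
  assumes "a \<le> d"
  shows "nbhd a \<noteq> {}"
proof -
  obtain m n where mn: "(m, n) \<in> R a"
    using R_nonempty[OF assms] by auto
  then have "(m, m) \<in> R 0" "(n, m) \<in> R (cnv a)"
    using R_subset[OF assms] R_0_iff mem_R_cnv_iff[OF assms] by auto
  then have "int_num X R a (cnv a) 0 > 0"
    using int_num_pos_iff[of 0 m m a "cnv a"] mn cnv_le[OF assms] assms by auto
  then have "card (nbhd a) > 0"
    using valency_eq_card_nbhd[OF assms] unfolding valency_def by simp
  then show ?thesis
    by auto
qed

lemma card_nbhd_mult_int_num:
  assumes "a \<le> d" "b \<le> d" "c \<le> d"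
  shows "card (nbhd a) * int_num X R c (cnv b) a = card (nbhd c) * int_num X R a b c"
proof -
  let ?S = "SIGMA y:nbhd a. {z \<in> nbhd c. (y, z) \<in> R b}"
  let ?S' = "SIGMA z:nbhd c. {y \<in> nbhd a. (y, z) \<in> R b}"
  have "card ?S = card (nbhd a) * int_num X R c (cnv b) a"
    using finite_nbhd assms card_nbhd_row by (simp add: card_SigmaI)
  moreover have "card ?S' = card (nbhd c) * int_num X R a b c"
    using finite_nbhd assms card_nbhd_col by (simp add: card_SigmaI)
  moreover have "?S = prod.swap ` ?S'"
    by auto
  then have "card ?S = card ?S'"
    by (simp add: card_image)
  ultimately show ?thesis
    by simp
qed

end

section \<open>The equivalence relation on the indices of valency two\<close>

locale quasi_thin_scheme = pointed_scheme +
  assumes quasi_thin: "quasi_thin X d R"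
begin

abbreviation A\<^sub>2 :: "nat set" where
  "A\<^sub>2 \<equiv> A2 X d R"

lemma mem_A2_iff: "a \<in> A\<^sub>2 \<longleftrightarrow> a \<le> d \<and> card (nbhd a) = 2"
  unfolding A2_def using valency_eq_card_nbhd by auto

lemma A2_le: "a \<in> A\<^sub>2 \<Longrightarrow> a \<le> d"
  unfolding A2_def by simp

lemma finite_A2: "finite A\<^sub>2"
  unfolding A2_def by simp

lemma card_nbhd_cases:
  assumes "a \<le> d"
  shows "card (nbhd a) = 1 \<or> a \<in> A\<^sub>2"
proof -
  have "card (nbhd a) \<le> 2"
    using quasi_thin assms valency_eq_card_nbhd[OF assms] unfolding quasi_thin_def by auto
  moreover have "card (nbhd a) \<noteq> 0"
    using nbhd_nonempty[OF assms] finite_nbhd[OF assms] by simp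
  ultimately show ?thesis
    using assms unfolding mem_A2_iff by linarith
qed

text \<open>Meaningful only for \<open>a \<in> A\<^sub>2\<close>; which of the two elements of \<open>x R\<^sub>a\<close> comes first
  is arbitrary.\<close>
definition nbhd_fst :: "nat \<Rightarrow> 'a" where
  "nbhd_fst a = fst (SOME p. nbhd a = {fst p, snd p} \<and> fst p \<noteq> snd p)"

definition nbhd_snd :: "nat \<Rightarrow> 'a" where
  "nbhd_snd a = snd (SOME p. nbhd a = {fst p, snd p} \<and> fst p \<noteq> snd p)"

lemma nbhd_eq_pair:
  assumes "a \<in> A\<^sub>2"
  shows "nbhd a = {nbhd_fst a, nbhd_snd a}" "nbhd_fst a \<noteq> nbhd_snd a"
proof -
  obtain y y' where "nbhd a = {y, y'}" "y \<noteq> y'"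
    using assms unfolding mem_A2_iff card_2_iff by blast
  then have "\<exists>p. nbhd a = {fst p, snd p} \<and> fst p \<noteq> snd p"
    by (intro exI[of _ "(y, y')"]) simp
  from someI_ex[OF this]
  show "nbhd a = {nbhd_fst a, nbhd_snd a}" "nbhd_fst a \<noteq> nbhd_snd a"
    unfolding nbhd_fst_def nbhd_snd_def by blast+
qed

lemma nbhd_fst_mem: "a \<in> A\<^sub>2 \<Longrightarrow> nbhd_fst a \<in> nbhd a"
  using nbhd_eq_pair by blast

lemma nbhd_snd_mem: "a \<in> A\<^sub>2 \<Longrightarrow> nbhd_snd a \<in> nbhd a"
  using nbhd_eq_pair by blast

lemma sum_nbhd_A2: "a \<in> A\<^sub>2 \<Longrightarrow> (\<Sum>y\<in>nbhd a. g y) = g (nbhd_fst a) + g (nbhd_snd a)"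
  using nbhd_eq_pair by simp

lemma card_nbhd_A2_filter:
  assumes "a \<in> A\<^sub>2"
  shows "card {y \<in> nbhd a. P y} = of_bool (P (nbhd_fst a)) + of_bool (P (nbhd_snd a))"
proof -
  have "{y \<in> nbhd a. P y}
      = (if P (nbhd_fst a) then {nbhd_fst a} else {}) \<union> (if P (nbhd_snd a) then {nbhd_snd a} else {})"
    using nbhd_eq_pair(1)[OF assms] by auto
  then show ?thesis
    using nbhd_eq_pair(2)[OF assms] by simp
qed

lemma int_num_cnv_A2:
  assumes "a \<in> A\<^sub>2" "c \<in> A\<^sub>2" "b \<le> d"
  shows "int_num X R c (cnv b) a = int_num X R a b c"
  using card_nbhd_mult_int_num[OF A2_le[OF assms(1)] assms(3) A2_le[OF assms(2)]]
    assms(1,2) mem_A2_iff by simp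

lemma card_nbhd_row_A2:
  assumes "a \<in> A\<^sub>2" "c \<in> A\<^sub>2" "b \<le> d" "y \<in> nbhd a"
  shows "card {z \<in> nbhd c. (y, z) \<in> R b} = int_num X R a b c"
  using card_nbhd_row[OF A2_le[OF assms(1)] assms(3) A2_le[OF assms(2)] assms(4)]
    int_num_cnv_A2[OF assms(1-3)] by simp

lemma int_num_A2_le_2:
  assumes "a \<in> A\<^sub>2" "c \<in> A\<^sub>2" "b \<le> d"
  shows "int_num X R a b c \<le> 2"
proof -
  have "card {z \<in> nbhd c. (nbhd_fst a, z) \<in> R b} \<le> card (nbhd c)"
    using finite_nbhd[OF A2_le[OF assms(2)]] by (intro card_mono) auto
  then show ?thesis
    using card_nbhd_row_A2[OF assms nbhd_fst_mem[OF assms(1)]] assms(2) mem_A2_iff by simp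
qed

lemma int_num_A2_pos:
  assumes "a \<in> A\<^sub>2" "c \<in> A\<^sub>2" "b \<le> d" "y \<in> nbhd a" "z \<in> nbhd c" "(y, z) \<in> R b"
  shows "int_num X R a b c > 0"
proof -
  have "{z \<in> nbhd c. (y, z) \<in> R b} \<noteq> {}"
    using assms(5,6) by blast
  then have "card {z \<in> nbhd c. (y, z) \<in> R b} > 0"
    using finite_nbhd[OF A2_le[OF assms(2)]] by (simp add: card_gt_0_iff)
  then show ?thesis
    using card_nbhd_row_A2[OF assms(1-4)] by simp
qed

lemma mem_R_if_int_num_A2_eq_2:
  assumes "a \<in> A\<^sub>2" "c \<in> A\<^sub>2" "b \<le> d" "int_num X R a b c = 2" "y \<in> nbhd a" "z \<in> nbhd c"
  shows "(y, z) \<in> R b"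
proof -
  have "card {z \<in> nbhd c. (y, z) \<in> R b} = card (nbhd c)"
    using card_nbhd_row_A2[OF assms(1-3,5)] assms(2,4) mem_A2_iff by simp
  then have "{z \<in> nbhd c. (y, z) \<in> R b} = nbhd c"
    using finite_nbhd[OF A2_le[OF assms(2)]] by (intro card_subset_eq) auto
  then show ?thesis
    using assms(6) by blast
qed

lemma cplx_prod_cnv_eq:
  assumes "b \<le> d" "c \<le> d"
  shows "cplx_prod X d R (cnv b) c = {e. e \<le> d \<and> (\<exists>y\<in>nbhd b. \<exists>z\<in>nbhd c. (y, z) \<in> R e)}"
proof (intro set_eqI iffI)
  fix e assume e: "e \<in> cplx_prod X d R (cnv b) c"
  then have "e \<le> d" "int_num X R (cnv b) c e > 0"
    unfolding cplx_prod_def by auto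
  moreover obtain m n where mn: "(m, n) \<in> R e"
    using R_nonempty[OF \<open>e \<le> d\<close>] by auto
  ultimately obtain l where "(l, m) \<in> R b" "(l, n) \<in> R c"
    using int_num_pos_iff[of e m n "cnv b" c] cnv_le mem_R_cnv_iff assms by auto
  then have "int_num X R c (cnv e) b > 0"
    using int_num_pos_iff[of b l m c "cnv e"] cnv_le mem_R_cnv_iff mn assms \<open>e \<le> d\<close> by auto
  moreover obtain y where y: "y \<in> nbhd b"
    using nbhd_nonempty[OF assms(1)] by auto
  ultimately have "card {z \<in> nbhd c. (y, z) \<in> R e} > 0"
    using card_nbhd_row[OF assms(1) \<open>e \<le> d\<close> assms(2) y] by simp
  then obtain z where "z \<in> nbhd c" "(y, z) \<in> R e"
    by (metis (no_types, lifting) card.empty empty_Collect_eq less_irrefl)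
  then show "e \<in> {e. e \<le> d \<and> (\<exists>y\<in>nbhd b. \<exists>z\<in>nbhd c. (y, z) \<in> R e)}"
    using y \<open>e \<le> d\<close> by blast
next
  fix e assume "e \<in> {e. e \<le> d \<and> (\<exists>y\<in>nbhd b. \<exists>z\<in>nbhd c. (y, z) \<in> R e)}"
  then obtain y z where "e \<le> d" and yz: "y \<in> nbhd b" "z \<in> nbhd c" "(y, z) \<in> R e"
    by blast
  then have "(y, x) \<in> R (cnv b)" "(x, z) \<in> R c"
    using mem_R_cnv_iff[OF assms(1)] unfolding nbhd_def by auto
  then have "int_num X R (cnv b) c e > 0"
    using int_num_pos_iff[OF \<open>e \<le> d\<close> yz(3) cnv_le[OF assms(1)] assms(2)] by blast
  then show "e \<in> cplx_prod X d R (cnv b) c"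
    unfolding cplx_prod_def using \<open>e \<le> d\<close> by blast
qed

definition linked :: "nat \<Rightarrow> nat \<Rightarrow> bool" where
  "linked a c \<longleftrightarrow> a \<in> A\<^sub>2 \<and> c \<in> A\<^sub>2 \<and> (\<exists>j\<le>d. int_num X R a j c = 1)"

definition link_rel :: "nat rel" where
  "link_rel = {(a, c). linked a c}"

lemma int_num_A2_diag:
  assumes "a \<in> A\<^sub>2"
  shows "int_num X R a 0 a = 1"
proof -
  have "{z \<in> nbhd a. (nbhd_fst a, z) \<in> R 0} = {nbhd_fst a}"
    using nbhd_fst_mem[OF assms] nbhd_subset[OF A2_le[OF assms]] R_0_iff by auto
  then show ?thesis
    using card_nbhd_row_A2[OF assms assms le0 nbhd_fst_mem[OF assms]] by simp
qed

lemma linked_refl: "a \<in> A\<^sub>2 \<Longrightarrow> linked a a"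
  unfolding linked_def using int_num_A2_diag by blast

lemma linked_sym:
  assumes "linked a c"
  shows "linked c a"
proof -
  obtain j where j: "j \<le> d" "int_num X R a j c = 1" and A2: "a \<in> A\<^sub>2" "c \<in> A\<^sub>2"
    using assms unfolding linked_def by blast
  then have "int_num X R c (cnv j) a = 1"
    using int_num_cnv_A2 by simp
  then show ?thesis
    unfolding linked_def using A2 cnv_le[OF j(1)] by blast
qed

lemma link_rel_subset: "link_rel\<^sup>+ \<subseteq> A\<^sub>2 \<times> A\<^sub>2"
proof -
  have "link_rel \<subseteq> A\<^sub>2 \<times> A\<^sub>2"
    unfolding link_rel_def linked_def by blast
  then show ?thesis
    by (rule trancl_subset_Sigma)
qed

lemma equiv_link_trancl: "equiv A\<^sub>2 (link_rel\<^sup>+)"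
proof (rule equivI)
  show "link_rel\<^sup>+ \<subseteq> A\<^sub>2 \<times> A\<^sub>2"
    by (rule link_rel_subset)
  show "refl_on A\<^sub>2 (link_rel\<^sup>+)"
    unfolding refl_on_def link_rel_def using linked_refl by blast
  have "sym link_rel"
    unfolding link_rel_def sym_def using linked_sym by blast
  then show "sym (link_rel\<^sup>+)"
    by (rule sym_trancl)
  show "trans (link_rel\<^sup>+)"
    by (rule trans_trancl)
qed

text \<open>If \<open>|R\<^sub>b\<^sub>' R\<^sub>c| = 2\<close> then \<open>p\<^sub>b\<^sub>e\<^sup>c = 1\<close> for the relation \<open>R\<^sub>e\<close> of one pair in
  \<open>x R\<^sub>b \<times> x R\<^sub>c\<close>: otherwise \<open>p\<^sub>b\<^sub>e\<^sup>c = 2\<close>, so all of \<open>x R\<^sub>b \<times> x R\<^sub>c\<close> lies in \<open>R\<^sub>e\<close>.\<close>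
lemma linked_if_card_cplx_prod:
  assumes "b \<in> A\<^sub>2" "c \<in> A\<^sub>2" "card (cplx_prod X d R (cnv b) c) \<noteq> 1"
  shows "linked b c"
proof (rule ccontr)
  assume not_linked: "\<not> linked b c"
  obtain e where e: "e \<le> d" "(nbhd_fst b, nbhd_fst c) \<in> R e"
    using R_cover nbhd_subset[OF A2_le] nbhd_fst_mem assms(1,2) by blast
  have "int_num X R b e c \<noteq> 1"
    using not_linked e(1) assms(1,2) unfolding linked_def by blast
  then have "int_num X R b e c = 2"
    using int_num_A2_le_2[OF assms(1,2) e(1)]
      int_num_A2_pos[OF assms(1,2) e(1) nbhd_fst_mem nbhd_fst_mem e(2)] assms(1,2)
    by linarith
  then have all: "(y, z) \<in> R e" if "y \<in> nbhd b" "z \<in> nbhd c" for y z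
    using mem_R_if_int_num_A2_eq_2[OF assms(1,2) e(1)] that by blast
  have "cplx_prod X d R (cnv b) c = {e}"
    unfolding cplx_prod_cnv_eq[OF A2_le[OF assms(1)] A2_le[OF assms(2)]]
    using all R_unique e(1) nbhd_fst_mem[OF assms(1)] nbhd_fst_mem[OF assms(2)] by blast
  then show False
    using assms(3) by simp
qed

lemma cplx_prod_cnv_A2:
  assumes "b \<in> A\<^sub>2" "c \<in> A\<^sub>2"
  shows "cplx_prod X d R (cnv b) c = {e. e \<le> d \<and> (\<exists>z\<in>nbhd c. (nbhd_fst b, z) \<in> R e)}"
proof (intro set_eqI iffI)
  fix e assume "e \<in> cplx_prod X d R (cnv b) c"
  then obtain y z where yz: "e \<le> d" "y \<in> nbhd b" "z \<in> nbhd c" "(y, z) \<in> R e"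
    unfolding cplx_prod_cnv_eq[OF A2_le[OF assms(1)] A2_le[OF assms(2)]] by blast
  have "card {z \<in> nbhd c. (nbhd_fst b, z) \<in> R e} > 0"
    using int_num_A2_pos[OF assms yz] card_nbhd_row_A2[OF assms yz(1) nbhd_fst_mem[OF assms(1)]]
    by simp
  then show "e \<in> {e. e \<le> d \<and> (\<exists>z\<in>nbhd c. (nbhd_fst b, z) \<in> R e)}"
    using yz(1) by (auto simp: card_gt_0_iff)
next
  fix e assume "e \<in> {e. e \<le> d \<and> (\<exists>z\<in>nbhd c. (nbhd_fst b, z) \<in> R e)}"
  then show "e \<in> cplx_prod X d R (cnv b) c"
    unfolding cplx_prod_cnv_eq[OF A2_le[OF assms(1)] A2_le[OF assms(2)]]
    using nbhd_fst_mem[OF assms(1)] by blast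
qed

lemma card_cplx_prod_A2:
  assumes "b \<in> A\<^sub>2" "c \<in> A\<^sub>2"
  shows "card (cplx_prod X d R (cnv b) c) \<in> {1, 2}"
proof -
  let ?y = "nbhd_fst b"
  obtain e1 where e1: "e1 \<le> d" "(?y, nbhd_fst c) \<in> R e1"
    using R_cover nbhd_subset[OF A2_le] nbhd_fst_mem assms by blast
  obtain e2 where e2: "e2 \<le> d" "(?y, nbhd_snd c) \<in> R e2"
    using R_cover nbhd_subset[OF A2_le] nbhd_fst_mem nbhd_snd_mem assms by blast
  have sub: "cplx_prod X d R (cnv b) c \<subseteq> {e1, e2}"
    unfolding cplx_prod_cnv_A2[OF assms] nbhd_eq_pair(1)[OF assms(2)]
    using R_unique[OF _ e1(1) _ e1(2)] R_unique[OF _ e2(1) _ e2(2)] by blast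
  have "e1 \<in> cplx_prod X d R (cnv b) c"
    unfolding cplx_prod_cnv_A2[OF assms] using e1 nbhd_fst_mem[OF assms(2)] by blast
  then have "card (cplx_prod X d R (cnv b) c) > 0"
    using sub by (auto simp: card_gt_0_iff intro: finite_subset)
  moreover have "card (cplx_prod X d R (cnv b) c) \<le> card {e1, e2}"
    using sub by (intro card_mono) auto
  moreover have "card {e1, e2} \<le> 2"
    by (cases "e1 = e2") auto
  ultimately show ?thesis
    by auto
qed

text \<open>The definition of \<^const>\<open>bad_pair\<close> without its condition on the complex product.\<close>
definition linked_chain :: "nat \<Rightarrow> nat \<Rightarrow> bool" where
  "linked_chain u v \<longleftrightarrow> (\<exists>a::nat. a \<ge> 1 \<and> (\<exists>i j l :: nat \<Rightarrow> nat.
     (\<forall>b\<le>a. i b \<le> d \<and> j b \<le> d \<and> l b \<le> d) \<and>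
     i 0 = u \<and> l a = v \<and>
     (\<forall>b\<le>a. valency X d R (i b) = 2 \<and> valency X d R (l b) = 2 \<and>
             int_num X R (i b) (j b) (l b) = 1) \<and>
     (\<forall>c<a. l c = i (Suc c))))"

lemma bad_pair_iff:
  "bad_pair X d R u v \<longleftrightarrow> linked_chain u v \<and> card (cplx_prod X d R (cnv u) v) = 1"
  unfolding bad_pair_def linked_chain_def by blast

lemma linked_chain_imp_trancl:
  assumes "linked_chain u v"
  shows "(u, v) \<in> link_rel\<^sup>+"
proof -
  obtain a i j l where a: "\<forall>b\<le>a. i b \<le> d \<and> j b \<le> d \<and> l b \<le> d"
    "i 0 = u" "l a = v" "\<forall>b\<le>a. valency X d R (i b) = 2 \<and> valency X d R (l b) = 2 \<and>
       int_num X R (i b) (j b) (l b) = 1" "\<forall>c<a. l c = i (Suc c)"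
    using assms unfolding linked_chain_def by blast
  have link: "(i b, l b) \<in> link_rel" if "b \<le> a" for b
    using a(1,4) that unfolding link_rel_def linked_def A2_def by blast
  have "b \<le> a \<Longrightarrow> (u, l b) \<in> link_rel\<^sup>+" for b
  proof (induction b)
    case 0
    then show ?case using link[of 0] a(2) by simp
  next
    case (Suc b)
    then have "(u, i (Suc b)) \<in> link_rel\<^sup>+"
      using a(5) by simp
    then show ?case
      using link[OF Suc.prems] by (rule trancl_into_trancl)
  qed
  then show ?thesis
    using a(3) by blast
qed

lemma linked_chain_refl:
  assumes "u \<in> A\<^sub>2"
  shows "linked_chain u u"
  unfolding linked_chain_def
proof (intro exI conjI)
  show "\<forall>b\<le>1. u \<le> d \<and> 0 \<le> d \<and> u \<le> d"
    using A2_le[OF assms] by simp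
  show "\<forall>b\<le>1. valency X d R u = 2 \<and> valency X d R u = 2 \<and> int_num X R u 0 u = 1"
    using assms int_num_A2_diag[OF assms] unfolding A2_def by simp
qed simp_all

lemma linked_chain_snoc:
  assumes "linked_chain u w" "linked w v"
  shows "linked_chain u v"
proof -
  obtain a i j l where a: "a \<ge> 1" "\<forall>b\<le>a. i b \<le> d \<and> j b \<le> d \<and> l b \<le> d"
    "i 0 = u" "l a = w" "\<forall>b\<le>a. valency X d R (i b) = 2 \<and> valency X d R (l b) = 2 \<and>
       int_num X R (i b) (j b) (l b) = 1" "\<forall>c<a. l c = i (Suc c)"
    using assms(1) unfolding linked_chain_def by blast
  obtain j0 where j0: "j0 \<le> d" "int_num X R w j0 v = 1" "w \<in> A\<^sub>2" "v \<in> A\<^sub>2"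
    using assms(2) unfolding linked_def by blast
  let ?i = "i(Suc a := w)" and ?j = "j(Suc a := j0)" and ?l = "l(Suc a := v)"
  have "(\<forall>b\<le>Suc a. ?i b \<le> d \<and> ?j b \<le> d \<and> ?l b \<le> d) \<and> ?i 0 = u \<and> ?l (Suc a) = v \<and>
    (\<forall>b\<le>Suc a. valency X d R (?i b) = 2 \<and> valency X d R (?l b) = 2 \<and>
       int_num X R (?i b) (?j b) (?l b) = 1) \<and> (\<forall>c<Suc a. ?l c = ?i (Suc c))"
    using a j0 unfolding A2_def by (auto simp: le_Suc_eq less_Suc_eq)
  then show ?thesis
    unfolding linked_chain_def by (intro exI[of _ "Suc a"] conjI exI[of _ ?i] exI[of _ ?j]
        exI[of _ ?l]) simp_all
qed

lemma trancl_imp_linked_chain: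
  assumes "(u, v) \<in> link_rel\<^sup>+"
  shows "linked_chain u v"
  using assms
proof (induction rule: trancl_induct)
  case (base v)
  then have "u \<in> A\<^sub>2" "linked u v"
    unfolding link_rel_def linked_def by auto
  then show ?case
    using linked_chain_refl linked_chain_snoc by blast
next
  case (step w v)
  then show ?case
    using linked_chain_snoc unfolding link_rel_def by blast
qed

lemma sim_rel_eq_link_trancl: "sim_rel X d R = link_rel\<^sup>+"
proof (intro set_eqI iffI; clarify)
  fix b c assume bc: "(b, c) \<in> sim_rel X d R"
  then have "b \<in> A\<^sub>2" "c \<in> A\<^sub>2"
    unfolding sim_rel_def by auto
  then show "(b, c) \<in> link_rel\<^sup>+"
    using bc linked_if_card_cplx_prod[of b c] linked_chain_imp_trancl
    unfolding sim_rel_def bad_pair_iff link_rel_def by auto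
next
  fix b c assume bc: "(b, c) \<in> link_rel\<^sup>+"
  then have "b \<in> A\<^sub>2" "c \<in> A\<^sub>2"
    using link_rel_subset by auto
  then show "(b, c) \<in> sim_rel X d R"
    using bc card_cplx_prod_A2[of b c] trancl_imp_linked_chain[OF bc]
    unfolding sim_rel_def bad_pair_iff by auto
qed

section \<open>Two complementary submodules of the standard module\<close>

definition nbhd_ind :: "nat \<Rightarrow> 'a \<Rightarrow> 'f::field" where
  "nbhd_ind a y = (if y \<in> nbhd a then 1 else 0)"

definition nbhd_diff :: "nat \<Rightarrow> 'a \<Rightarrow> 'f::field" where
  "nbhd_diff c y = (if y = nbhd_fst c then 1 else if y = nbhd_snd c then -1 else 0)"

definition nbhd_rep :: "nat \<Rightarrow> 'a" where
  "nbhd_rep a = (SOME y. y \<in> nbhd a)"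

text \<open>The spans of the vectors \<^const>\<open>nbhd_ind\<close> and of the vectors \<^const>\<open>nbhd_diff\<close>, described
  intrinsically. Their sum is the whole standard module exactly when \<open>2 \<noteq> 0\<close>.\<close>

definition nbhd_const :: "('a \<Rightarrow> 'f::field) \<Rightarrow> bool" where
  "nbhd_const g \<longleftrightarrow> (\<forall>y. y \<notin> X \<longrightarrow> g y = 0) \<and> (\<forall>a\<le>d. \<forall>y\<in>nbhd a. \<forall>y'\<in>nbhd a. g y = g y')"

definition nbhd_balanced :: "('a \<Rightarrow> 'f::field) \<Rightarrow> bool" where
  "nbhd_balanced g \<longleftrightarrow> (\<forall>y. y \<notin> X \<longrightarrow> g y = 0) \<and> (\<forall>a\<le>d. (\<Sum>y\<in>nbhd a. g y) = 0)"

lemma nbhd_rep_mem: "a \<le> d \<Longrightarrow> nbhd_rep a \<in> nbhd a"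
  unfolding nbhd_rep_def using nbhd_nonempty by (simp add: some_in_eq)

lemma nbhd_ind_eq: "a \<le> d \<Longrightarrow> b \<le> d \<Longrightarrow> y \<in> nbhd a \<Longrightarrow> nbhd_ind b y = (if b = a then 1 else 0)"
  unfolding nbhd_ind_def using nbhd_unique by auto

lemma nbhd_ind_outside: "b \<le> d \<Longrightarrow> y \<notin> X \<Longrightarrow> nbhd_ind b y = 0"
  unfolding nbhd_ind_def using nbhd_subset by auto

lemma nbhd_diff_outside: "c \<in> A\<^sub>2 \<Longrightarrow> y \<notin> nbhd c \<Longrightarrow> nbhd_diff c y = 0"
  unfolding nbhd_diff_def using nbhd_fst_mem nbhd_snd_mem by auto

lemma nbhd_diff_other:
  "c \<in> A\<^sub>2 \<Longrightarrow> a \<le> d \<Longrightarrow> y \<in> nbhd a \<Longrightarrow> a \<noteq> c \<Longrightarrow> nbhd_diff c y = 0"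
  using nbhd_diff_outside nbhd_unique A2_le by blast

lemma nbhd_diff_fst: "nbhd_diff c (nbhd_fst c) = 1"
  unfolding nbhd_diff_def by simp

lemma nbhd_diff_snd:
  assumes "c \<in> A\<^sub>2"
  shows "nbhd_diff c (nbhd_snd c) = -1"
proof -
  have "nbhd_snd c \<noteq> nbhd_fst c"
    using nbhd_eq_pair(2)[OF assms] by simp
  then show ?thesis
    unfolding nbhd_diff_def by simp
qed

lemma nbhd_diff_at_fst:
  assumes "a \<in> A\<^sub>2" "c \<in> A\<^sub>2"
  shows "nbhd_diff c (nbhd_fst a) = (if a = c then 1 else 0)"
  using nbhd_diff_other[OF assms(2) A2_le[OF assms(1)] nbhd_fst_mem[OF assms(1)]]
  by (cases "a = c") (simp_all add: nbhd_diff_fst)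

lemma sum_nbhd_ind:
  assumes "j \<le> d" "l \<le> d"
  shows "(\<Sum>w\<in>nbhd j. nbhd_ind l w) = (if l = j then of_nat (card (nbhd j)) else (0::'f::field))"
proof -
  have "(\<Sum>w\<in>nbhd j. nbhd_ind l w) = (\<Sum>w\<in>nbhd j. if l = j then 1 else (0::'f))"
    using nbhd_ind_eq[OF assms(1,2)] by (rule sum.cong[OF refl])
  then show ?thesis
    by simp
qed

lemma sum_nbhd_diff:
  assumes "c \<in> A\<^sub>2" "a \<le> d"
  shows "(\<Sum>y\<in>nbhd a. nbhd_diff c y) = (0::'f::field)"
proof (cases "a = c")
  case True
  then show ?thesis
    by (simp add: sum_nbhd_A2[OF assms(1)] nbhd_diff_fst nbhd_diff_snd[OF assms(1)])
next
  case False
  then show ?thesis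
    by (simp add: nbhd_diff_other[OF assms(1,2)])
qed

lemma xmat_apply_nbhd_ind:
  assumes "j \<le> d"
  shows "xmat_apply X M (nbhd_ind j) y = (\<Sum>w\<in>nbhd j. M y w)"
proof -
  have "xmat_apply X M (nbhd_ind j) y = (\<Sum>w\<in>nbhd j. M y w * nbhd_ind j w)"
    unfolding xmat_apply_def using nbhd_subset[OF assms] finite_X
    by (intro sum.mono_neutral_right) (auto simp: nbhd_ind_def)
  then show ?thesis
    by (simp add: nbhd_ind_def)
qed

lemma xmat_apply_nbhd_diff:
  assumes "c \<in> A\<^sub>2"
  shows "xmat_apply X M (nbhd_diff c) y = M y (nbhd_fst c) - M y (nbhd_snd c)"
proof -
  have "xmat_apply X M (nbhd_diff c) y = (\<Sum>w\<in>nbhd c. M y w * nbhd_diff c w)"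
    unfolding xmat_apply_def using nbhd_subset[OF A2_le[OF assms]] finite_X nbhd_diff_outside[OF assms]
    by (intro sum.mono_neutral_right) auto
  then show ?thesis
    by (simp add: sum_nbhd_A2[OF assms] nbhd_diff_fst nbhd_diff_snd[OF assms])
qed

lemma nbhd_constI:
  assumes "\<And>y. y \<notin> X \<Longrightarrow> g y = 0" "\<And>a y y'. a \<le> d \<Longrightarrow> y \<in> nbhd a \<Longrightarrow> y' \<in> nbhd a \<Longrightarrow> g y = g y'"
  shows "nbhd_const g"
  unfolding nbhd_const_def using assms by blast

lemma nbhd_constD:
  assumes "nbhd_const g"
  shows "y \<notin> X \<Longrightarrow> g y = 0" "a \<le> d \<Longrightarrow> y \<in> nbhd a \<Longrightarrow> y' \<in> nbhd a \<Longrightarrow> g y = g y'"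
  using assms unfolding nbhd_const_def by blast+

lemma nbhd_const_nbhd_ind: "j \<le> d \<Longrightarrow> nbhd_const (nbhd_ind j)"
  by (rule nbhd_constI) (simp_all add: nbhd_ind_outside nbhd_ind_eq)

lemma nbhd_balanced_nbhd_diff:
  assumes "c \<in> A\<^sub>2"
  shows "nbhd_balanced (nbhd_diff c)"
proof -
  have "nbhd_diff c y = 0" if "y \<notin> X" for y
    using nbhd_diff_outside[OF assms] nbhd_subset[OF A2_le[OF assms]] that by blast
  then show ?thesis
    unfolding nbhd_balanced_def using sum_nbhd_diff[OF assms] by blast
qed

lemma nbhd_const_expansion:
  fixes g :: "'a \<Rightarrow> 'f::field"
  assumes "nbhd_const g"
  shows "g = (\<lambda>y. \<Sum>a\<le>d. g (nbhd_rep a) * nbhd_ind a y)"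
proof
  fix y
  show "g y = (\<Sum>a\<le>d. g (nbhd_rep a) * nbhd_ind a y)"
  proof (cases "y \<in> X")
    case False
    then show ?thesis
      using nbhd_constD(1)[OF assms False] by (simp add: nbhd_ind_outside)
  next
    case True
    then obtain a0 where a0: "a0 \<le> d" "y \<in> nbhd a0"
      using nbhd_cover by blast
    have "(\<Sum>a\<le>d. g (nbhd_rep a) * nbhd_ind a y) = (\<Sum>a\<le>d. if a = a0 then g (nbhd_rep a0) else 0)"
      by (rule sum.cong) (simp_all add: nbhd_ind_eq[OF a0(1) _ a0(2)])
    also have "\<dots> = g (nbhd_rep a0)"
      using a0(1) by simp
    also have "\<dots> = g y"
      using nbhd_constD(2)[OF assms a0(1) nbhd_rep_mem[OF a0(1)] a0(2)] .
    finally show ?thesis ..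
  qed
qed

lemma nbhd_balanced_on_nbhd:
  fixes g :: "'a \<Rightarrow> 'f::field"
  assumes "nbhd_balanced g" "a \<le> d" "y \<in> nbhd a"
  shows "g y = (if a \<in> A\<^sub>2 then g (nbhd_fst a) * nbhd_diff a y else 0)"
proof -
  have sum0: "(\<Sum>y\<in>nbhd a. g y) = 0"
    using assms(1,2) unfolding nbhd_balanced_def by blast
  show ?thesis
  proof (cases "a \<in> A\<^sub>2")
    case False
    then obtain y' where "nbhd a = {y'}"
      using card_nbhd_cases[OF assms(2)] card_1_singletonE by blast
    then show ?thesis
      using sum0 assms(3) False by simp
  next
    case True
    then have "g (nbhd_fst a) + g (nbhd_snd a) = 0"
      using sum0 by (simp add: sum_nbhd_A2)
    moreover have "y = nbhd_fst a \<or> y = nbhd_snd a"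
      using nbhd_eq_pair(1)[OF True] assms(3) by blast
    ultimately show ?thesis
      using True by (auto simp: nbhd_diff_fst nbhd_diff_snd add_eq_0_iff)
  qed
qed

lemma nbhd_balanced_expansion:
  fixes g :: "'a \<Rightarrow> 'f::field"
  assumes "nbhd_balanced g"
  shows "g = (\<lambda>y. \<Sum>c\<in>A\<^sub>2. g (nbhd_fst c) * nbhd_diff c y)"
proof
  fix y
  show "g y = (\<Sum>c\<in>A\<^sub>2. g (nbhd_fst c) * nbhd_diff c y)"
  proof (cases "y \<in> X")
    case False
    then have "\<forall>c\<in>A\<^sub>2. nbhd_diff c y = (0::'f)"
      using nbhd_diff_outside nbhd_subset[OF A2_le] by blast
    then show ?thesis
      using assms False unfolding nbhd_balanced_def by simp
  next
    case True
    then obtain a where a: "a \<le> d" "y \<in> nbhd a"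
      using nbhd_cover by blast
    have "(\<Sum>c\<in>A\<^sub>2. g (nbhd_fst c) * nbhd_diff c y)
        = (\<Sum>c\<in>A\<^sub>2. if c = a then g (nbhd_fst a) * nbhd_diff a y else 0)"
      using nbhd_diff_other[OF _ a] by (intro sum.cong) auto
    also have "\<dots> = g y"
      using nbhd_balanced_on_nbhd[OF assms a] finite_A2 by simp
    finally show ?thesis ..
  qed
qed

lemma nbhd_const_add:
  assumes "nbhd_const g" "nbhd_const h"
  shows "nbhd_const (\<lambda>y. g y + h y)"
proof (rule nbhd_constI)
  show "g y + h y = 0" if "y \<notin> X" for y
    using nbhd_constD(1)[OF assms(1) that] nbhd_constD(1)[OF assms(2) that] by simp
  show "g y + h y = g y' + h y'" if "a \<le> d" "y \<in> nbhd a" "y' \<in> nbhd a" for a y y'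
    using nbhd_constD(2)[OF assms(1) that] nbhd_constD(2)[OF assms(2) that] by simp
qed

lemma nbhd_const_smult:
  assumes "nbhd_const g"
  shows "nbhd_const (\<lambda>y. c * g y)"
proof (rule nbhd_constI)
  show "c * g y = 0" if "y \<notin> X" for y
    using nbhd_constD(1)[OF assms that] by simp
  show "c * g y = c * g y'" if "a \<le> d" "y \<in> nbhd a" "y' \<in> nbhd a" for a y y'
    using nbhd_constD(2)[OF assms that] by simp
qed

lemma nbhd_const_lincomb:
  assumes "\<And>t. t \<in> S \<Longrightarrow> nbhd_const (h t)"
  shows "nbhd_const (\<lambda>y. \<Sum>t\<in>S. c t * h t y)"
proof (rule nbhd_constI)
  show "(\<Sum>t\<in>S. c t * h t y) = 0" if "y \<notin> X" for y
    using nbhd_constD(1)[OF assms that] by simp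
  show "(\<Sum>t\<in>S. c t * h t y) = (\<Sum>t\<in>S. c t * h t y')"
    if "a \<le> d" "y \<in> nbhd a" "y' \<in> nbhd a" for a y y'
    using nbhd_constD(2)[OF assms that] by simp
qed

lemma nbhd_balanced_add: "nbhd_balanced g \<Longrightarrow> nbhd_balanced h \<Longrightarrow> nbhd_balanced (\<lambda>y. g y + h y)"
  unfolding nbhd_balanced_def by (simp add: sum.distrib)

lemma nbhd_balanced_smult: "nbhd_balanced g \<Longrightarrow> nbhd_balanced (\<lambda>y. c * g y)"
  unfolding nbhd_balanced_def by (simp add: sum_distrib_left[symmetric])

lemma nbhd_balanced_lincomb:
  assumes "\<And>t. t \<in> S \<Longrightarrow> nbhd_balanced (h t)"
  shows "nbhd_balanced (\<lambda>y. \<Sum>t\<in>S. c t * h t y)"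
proof -
  have "(\<Sum>y\<in>nbhd a. \<Sum>t\<in>S. c t * h t y) = 0" if "a \<le> d" for a
  proof -
    have "(\<Sum>y\<in>nbhd a. \<Sum>t\<in>S. c t * h t y) = (\<Sum>t\<in>S. c t * (\<Sum>y\<in>nbhd a. h t y))"
      by (subst sum.swap) (simp add: sum_distrib_left)
    also have "\<dots> = 0"
      using assms that unfolding nbhd_balanced_def by simp
    finally show ?thesis .
  qed
  then show ?thesis
    using assms unfolding nbhd_balanced_def by simp
qed

section \<open>The Terwilliger algebra respects the block decomposition\<close>

text \<open>By \<open>nbhd_balanced_expansion\<close>, the coefficient of \<^term>\<open>nbhd_diff a\<close> in a
  balanced vector \<open>g\<close> is \<^term>\<open>g (nbhd_fst a)\<close>; so the last clause says that \<open>M\<close> maps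
  \<^term>\<open>nbhd_diff c\<close> into the span of the \<^term>\<open>nbhd_diff a\<close> with \<open>a\<close> in the class of \<open>c\<close>.\<close>
definition preserves_blocks :: "('a, 'f::field) xmat \<Rightarrow> bool" where
  "preserves_blocks M \<longleftrightarrow> xmat_supported X M \<and>
     (\<forall>j\<le>d. nbhd_const (xmat_apply X M (nbhd_ind j))) \<and>
     (\<forall>c\<in>A\<^sub>2. nbhd_balanced (xmat_apply X M (nbhd_diff c)) \<and>
        (\<forall>a\<in>A\<^sub>2. (a, c) \<notin> link_rel\<^sup>+ \<longrightarrow> xmat_apply X M (nbhd_diff c) (nbhd_fst a) = 0))"

lemma xmat_apply_adj_mat_nbhd_ind:
  assumes "b \<le> d" "j \<le> d" "a \<le> d" "y \<in> nbhd a"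
  shows "xmat_apply X (adj_mat R b) (nbhd_ind j) y = of_nat (int_num X R j (cnv b) a)"
  using card_nbhd_row[OF assms(3,1,2,4)]
  by (simp add: xmat_apply_nbhd_ind[OF assms(2)] adj_mat_def sum_if_eq_card[OF finite_nbhd[OF assms(2)]])

lemma sum_nbhd_adj_mat_nbhd_diff:
  assumes "b \<le> d" "c \<in> A\<^sub>2" "a \<le> d"
  shows "(\<Sum>y\<in>nbhd a. xmat_apply X (adj_mat R b) (nbhd_diff c) y) = (0::'f::field)"
proof -
  have "(\<Sum>y\<in>nbhd a. xmat_apply X (adj_mat R b) (nbhd_diff c) y)
      = of_nat (card {y \<in> nbhd a. (y, nbhd_fst c) \<in> R b})
        - (of_nat (card {y \<in> nbhd a. (y, nbhd_snd c) \<in> R b}) :: 'f)"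
    by (simp add: xmat_apply_nbhd_diff[OF assms(2)] adj_mat_def sum_subtractf
        sum_if_eq_card[OF finite_nbhd[OF assms(3)]])
  also have "\<dots> = 0"
    using card_nbhd_col[OF assms(3,1) A2_le[OF assms(2)]] nbhd_fst_mem[OF assms(2)]
      nbhd_snd_mem[OF assms(2)] by simp
  finally show ?thesis .
qed

lemma adj_mat_nbhd_diff_at_fst:
  assumes "b \<le> d" "a \<in> A\<^sub>2" "c \<in> A\<^sub>2" "(a, c) \<notin> link_rel\<^sup>+"
  shows "xmat_apply X (adj_mat R b) (nbhd_diff c) (nbhd_fst a) = (0::'f::field)"
proof (rule ccontr)
  let ?P = "\<lambda>z. (nbhd_fst a, z) \<in> R b"
  assume "xmat_apply X (adj_mat R b) (nbhd_diff c) (nbhd_fst a) \<noteq> (0::'f)"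
  then have "?P (nbhd_fst c) \<noteq> ?P (nbhd_snd c)"
    by (auto simp: xmat_apply_nbhd_diff[OF assms(3)] adj_mat_def split: if_splits)
  then have "int_num X R a b c = 1"
    using card_nbhd_row_A2[OF assms(2,3,1) nbhd_fst_mem[OF assms(2)]]
      card_nbhd_A2_filter[OF assms(3), of ?P] by auto
  then have "(a, c) \<in> link_rel"
    unfolding link_rel_def linked_def using assms(1-3) by blast
  then show False
    using assms(4) by blast
qed

lemma preserves_blocks_adj_mat:
  assumes "b \<le> d"
  shows "preserves_blocks (adj_mat R b :: ('a, 'f::field) xmat)"
  unfolding preserves_blocks_def
proof (intro conjI allI impI ballI)
  show supp: "xmat_supported X (adj_mat R b :: ('a, 'f) xmat)"
    unfolding xmat_supported_def adj_mat_def using R_subset[OF assms] by auto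
  show "nbhd_const (xmat_apply X (adj_mat R b :: ('a, 'f) xmat) (nbhd_ind j))" if "j \<le> d" for j
    by (intro nbhd_constI)
      (simp_all add: xmat_apply_outside[OF supp] xmat_apply_adj_mat_nbhd_ind[OF assms that])
  show "nbhd_balanced (xmat_apply X (adj_mat R b :: ('a, 'f) xmat) (nbhd_diff c))" if "c \<in> A\<^sub>2" for c
    unfolding nbhd_balanced_def
    using xmat_apply_outside[OF supp] sum_nbhd_adj_mat_nbhd_diff[OF assms that] by blast
  show "xmat_apply X (adj_mat R b :: ('a, 'f) xmat) (nbhd_diff c) (nbhd_fst a) = 0"
    if "c \<in> A\<^sub>2" "a \<in> A\<^sub>2" "(a, c) \<notin> link_rel\<^sup>+" for a c
    using adj_mat_nbhd_diff_at_fst[OF assms that(2,1,3)] .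
qed

lemma xmat_apply_dual_idem:
  assumes "a \<le> d"
  shows "xmat_apply X (dual_idem R x a) f y = (if y \<in> nbhd a then f y else 0)"
proof -
  have "xmat_apply X (dual_idem R x a) f y = (\<Sum>w\<in>X. if w = y \<and> y \<in> nbhd a then f y else 0)"
    unfolding xmat_apply_def dual_idem_def nbhd_def by (rule sum.cong) auto
  then show ?thesis
    using finite_X nbhd_subset[OF assms] by auto
qed

lemma preserves_blocks_dual_idem:
  assumes "a \<le> d"
  shows "preserves_blocks (dual_idem R x a :: ('a, 'f::field) xmat)"
  unfolding preserves_blocks_def
proof (intro conjI allI impI ballI)
  show supp: "xmat_supported X (dual_idem R x a :: ('a, 'f) xmat)"
    unfolding xmat_supported_def dual_idem_def using R_subset[OF assms] by auto
  have same_nbhd: "y \<in> nbhd a \<longleftrightarrow> a' = a" if "a' \<le> d" "y \<in> nbhd a'" for a' y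
    using nbhd_unique[OF that(1) assms that(2)] that(2) by auto
  show "nbhd_const (xmat_apply X (dual_idem R x a :: ('a, 'f) xmat) (nbhd_ind j))" if "j \<le> d" for j
  proof (rule nbhd_constI)
    show "xmat_apply X (dual_idem R x a) (nbhd_ind j) y = (0::'f)" if "y \<notin> X" for y
      by (rule xmat_apply_outside[OF supp that])
    show "xmat_apply X (dual_idem R x a) (nbhd_ind j) y = (xmat_apply X (dual_idem R x a) (nbhd_ind j) y' :: 'f)"
      if "a' \<le> d" "y \<in> nbhd a'" "y' \<in> nbhd a'" for a' y y'
    proof -
      have "nbhd_ind j y = (nbhd_ind j y' :: 'f)"
        using nbhd_constD(2)[OF nbhd_const_nbhd_ind[OF \<open>j \<le> d\<close>] that] .
      then show ?thesis
        using same_nbhd[OF that(1,2)] same_nbhd[OF that(1,3)]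
        by (simp add: xmat_apply_dual_idem[OF assms])
    qed
  qed
  show "nbhd_balanced (xmat_apply X (dual_idem R x a :: ('a, 'f) xmat) (nbhd_diff c))" if "c \<in> A\<^sub>2" for c
  proof -
    have "(\<Sum>y\<in>nbhd a'. xmat_apply X (dual_idem R x a) (nbhd_diff c) y) = (0::'f)" if "a' \<le> d" for a'
      using same_nbhd[OF that] sum_nbhd_diff[OF \<open>c \<in> A\<^sub>2\<close> that]
      by (cases "a' = a") (simp_all add: xmat_apply_dual_idem[OF assms] cong: sum.cong)
    then show ?thesis
      unfolding nbhd_balanced_def using xmat_apply_outside[OF supp] by blast
  qed
  show "xmat_apply X (dual_idem R x a :: ('a, 'f) xmat) (nbhd_diff c) (nbhd_fst a') = 0"
    if "c \<in> A\<^sub>2" "a' \<in> A\<^sub>2" "(a', c) \<notin> link_rel\<^sup>+" for a' c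
  proof -
    have "a' \<noteq> c"
      using that linked_refl unfolding link_rel_def by blast
    then show ?thesis
      by (simp add: xmat_apply_dual_idem[OF assms] nbhd_diff_at_fst[OF that(2,1)])
  qed
qed

lemma preserves_blocks_one: "preserves_blocks (xmat_one X :: ('a, 'f::field) xmat)"
  unfolding preserves_blocks_def
proof (intro conjI allI impI ballI)
  show "xmat_supported X (xmat_one X :: ('a, 'f) xmat)"
    unfolding xmat_supported_def xmat_one_def by simp
  show "nbhd_const (xmat_apply X (xmat_one X) (nbhd_ind j) :: 'a \<Rightarrow> 'f)" if "j \<le> d" for j
  proof -
    have "xmat_apply X (xmat_one X) (nbhd_ind j) = (nbhd_ind j :: 'a \<Rightarrow> 'f)"
      by (rule xmat_apply_one[OF finite_X]) (rule nbhd_ind_outside[OF that])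
    then show ?thesis
      using nbhd_const_nbhd_ind[OF that] by simp
  qed
  have diff: "xmat_apply X (xmat_one X) (nbhd_diff c) = (nbhd_diff c :: 'a \<Rightarrow> 'f)" if "c \<in> A\<^sub>2" for c
    using nbhd_balanced_nbhd_diff[OF that] unfolding nbhd_balanced_def
    by (intro xmat_apply_one[OF finite_X]) blast
  show "nbhd_balanced (xmat_apply X (xmat_one X) (nbhd_diff c) :: 'a \<Rightarrow> 'f)" if "c \<in> A\<^sub>2" for c
    unfolding diff[OF that] by (rule nbhd_balanced_nbhd_diff[OF that])
  show "xmat_apply X (xmat_one X) (nbhd_diff c) (nbhd_fst a) = (0 :: 'f)"
    if "c \<in> A\<^sub>2" "a \<in> A\<^sub>2" "(a, c) \<notin> link_rel\<^sup>+" for a c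
  proof -
    have "a \<noteq> c"
      using that linked_refl unfolding link_rel_def by blast
    then show ?thesis
      unfolding diff[OF that(1)] nbhd_diff_at_fst[OF that(2,1)] by simp
  qed
qed

lemma preserves_blocks_zero: "preserves_blocks ((\<lambda>y z. 0) :: ('a, 'f::field) xmat)"
  unfolding preserves_blocks_def xmat_supported_def xmat_apply_def nbhd_const_def nbhd_balanced_def
  by simp

lemma preserves_blocks_add:
  assumes "preserves_blocks M" "preserves_blocks K"
  shows "preserves_blocks (\<lambda>y z. M y z + K y z)"
  using assms unfolding preserves_blocks_def xmat_apply_add
  by (simp add: xmat_supported_def nbhd_const_add nbhd_balanced_add)

lemma preserves_blocks_smult:
  assumes "preserves_blocks M"
  shows "preserves_blocks (\<lambda>y z. c * M y z)"
  using assms unfolding preserves_blocks_def xmat_apply_smult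
  by (simp add: xmat_supported_def nbhd_const_smult nbhd_balanced_smult)

lemma xmat_apply_mult_nbhd_ind:
  assumes "preserves_blocks K" "j \<le> d"
  shows "xmat_apply X (xmat_mult X M K) (nbhd_ind j)
    = (\<lambda>y. \<Sum>a\<le>d. xmat_apply X K (nbhd_ind j) (nbhd_rep a) * xmat_apply X M (nbhd_ind a) y)"
proof -
  have "nbhd_const (xmat_apply X K (nbhd_ind j))"
    using assms unfolding preserves_blocks_def by blast
  then show ?thesis
    unfolding xmat_apply_mult by (subst nbhd_const_expansion) (simp_all add: xmat_apply_lincomb)
qed

lemma xmat_apply_mult_nbhd_diff:
  assumes "preserves_blocks K" "c \<in> A\<^sub>2"
  shows "xmat_apply X (xmat_mult X M K) (nbhd_diff c)
    = (\<lambda>y. \<Sum>e\<in>A\<^sub>2. xmat_apply X K (nbhd_diff c) (nbhd_fst e) * xmat_apply X M (nbhd_diff e) y)"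
proof -
  have "nbhd_balanced (xmat_apply X K (nbhd_diff c))"
    using assms unfolding preserves_blocks_def by blast
  then show ?thesis
    unfolding xmat_apply_mult by (subst nbhd_balanced_expansion) (simp_all add: xmat_apply_lincomb)
qed

lemma preserves_blocks_mult:
  assumes M: "preserves_blocks M" and K: "preserves_blocks K"
  shows "preserves_blocks (xmat_mult X M K)"
  unfolding preserves_blocks_def
proof (intro conjI allI impI ballI)
  show "xmat_supported X (xmat_mult X M K)"
    using assms unfolding preserves_blocks_def by (blast intro: xmat_supported_mult)
  show "nbhd_const (xmat_apply X (xmat_mult X M K) (nbhd_ind j))" if "j \<le> d" for j
    unfolding xmat_apply_mult_nbhd_ind[OF K that]
    using M unfolding preserves_blocks_def by (intro nbhd_const_lincomb) simp
  show "nbhd_balanced (xmat_apply X (xmat_mult X M K) (nbhd_diff c))" if "c \<in> A\<^sub>2" for c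
    unfolding xmat_apply_mult_nbhd_diff[OF K that]
    using M unfolding preserves_blocks_def by (intro nbhd_balanced_lincomb) simp
  show "xmat_apply X (xmat_mult X M K) (nbhd_diff c) (nbhd_fst a) = 0"
    if "c \<in> A\<^sub>2" "a \<in> A\<^sub>2" "(a, c) \<notin> link_rel\<^sup>+" for a c
  proof -
    have "xmat_apply X K (nbhd_diff c) (nbhd_fst e) * xmat_apply X M (nbhd_diff e) (nbhd_fst a) = 0"
      if "e \<in> A\<^sub>2" for e
    proof (cases "(e, c) \<in> link_rel\<^sup>+")
      case True
      have "(a, e) \<notin> link_rel\<^sup>+"
      proof
        assume "(a, e) \<in> link_rel\<^sup>+"
        then have "(a, c) \<in> link_rel\<^sup>+"
          using True by (rule trancl_trans)
        then show False
          using \<open>(a, c) \<notin> link_rel\<^sup>+\<close> by contradiction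
      qed
      then show ?thesis
        using M \<open>e \<in> A\<^sub>2\<close> \<open>a \<in> A\<^sub>2\<close> unfolding preserves_blocks_def by simp
    next
      case False
      then show ?thesis
        using K \<open>e \<in> A\<^sub>2\<close> \<open>c \<in> A\<^sub>2\<close> unfolding preserves_blocks_def by simp
    qed
    then show ?thesis
      unfolding xmat_apply_mult_nbhd_diff[OF K that(1)] by (intro sum.neutral) blast
  qed
qed

lemma preserves_blocks_terwilliger:
  assumes "M \<in> (terwilliger_alg X d R x :: ('a, 'f::field) xmat set)"
  shows "preserves_blocks M"
  using assms unfolding terwilliger_alg_def
proof (induction rule: gen_alg.induct)
  case (gen A)
  then show ?case
    using preserves_blocks_adj_mat preserves_blocks_dual_idem by auto
qed (simp_all add: preserves_blocks_one preserves_blocks_zero preserves_blocks_add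
    preserves_blocks_smult preserves_blocks_mult)

abbreviation classes :: "nat set set" where
  "classes \<equiv> A\<^sub>2 // link_rel\<^sup>+"

lemma link_trancl_sym: "(a, c) \<in> link_rel\<^sup>+ \<Longrightarrow> (c, a) \<in> link_rel\<^sup>+"
  using equiv_link_trancl unfolding equiv_def sym_def by blast

lemma class_subset: "C \<in> classes \<Longrightarrow> C \<subseteq> A\<^sub>2"
  using in_quotient_imp_subset[OF equiv_link_trancl] .

lemma finite_class: "C \<in> classes \<Longrightarrow> finite C"
  using class_subset finite_A2 finite_subset by blast

lemma finite_classes: "finite classes"
  using finite_quotient[OF finite_A2] link_rel_subset by blast

lemma class_trancl: "C \<in> classes \<Longrightarrow> a \<in> C \<Longrightarrow> c \<in> C \<Longrightarrow> (a, c) \<in> link_rel\<^sup>+"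
  using in_quotient_imp_in_rel[OF equiv_link_trancl] by blast

lemma class_closed: "C \<in> classes \<Longrightarrow> a \<in> C \<Longrightarrow> (a, c) \<in> link_rel\<^sup>+ \<Longrightarrow> c \<in> C"
  using in_quotient_imp_closed[OF equiv_link_trancl] by blast

lemma class_unique: "C \<in> classes \<Longrightarrow> C' \<in> classes \<Longrightarrow> a \<in> C \<Longrightarrow> a \<in> C' \<Longrightarrow> C = C'"
  using quotient_disj[OF equiv_link_trancl] by blast

lemma trancl_in_class:
  assumes "(a, c) \<in> link_rel\<^sup>+"
  obtains C where "C \<in> classes" "a \<in> C" "c \<in> C"
proof
  show "link_rel\<^sup>+ `` {a} \<in> classes"
    using link_rel_subset assms by (blast intro: quotientI)
  show "a \<in> link_rel\<^sup>+ `` {a}"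
    using link_rel_subset assms linked_refl unfolding link_rel_def by blast
  show "c \<in> link_rel\<^sup>+ `` {a}"
    using assms by blast
qed

definition class_enum :: "nat set \<Rightarrow> nat \<Rightarrow> nat" where
  "class_enum C = (!) (sorted_list_of_set C)"

lemma class_enum_bij: "C \<in> classes \<Longrightarrow> bij_betw (class_enum C) {..<card C} C"
  unfolding class_enum_def using finite_class by (intro bij_betw_nth) auto

lemma class_enum_mem: "C \<in> classes \<Longrightarrow> i < card C \<Longrightarrow> class_enum C i \<in> C"
  using class_enum_bij bij_betwE by blast

lemma class_enum_eq_iff:
  "C \<in> classes \<Longrightarrow> i < card C \<Longrightarrow> j < card C \<Longrightarrow> class_enum C i = class_enum C j \<longleftrightarrow> i = j"
  using class_enum_bij bij_betw_imp_inj_on inj_on_eq_iff lessThan_iff by metis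

lemma class_enum_surj:
  assumes "C \<in> classes" "a \<in> C"
  obtains i where "i < card C" "class_enum C i = a"
  using class_enum_bij[OF assms(1)] assms(2) by (metis bij_betw_iff_bijections lessThan_iff)

definition block_index :: "nat set option set" where
  "block_index = insert None (Some ` classes)"

definition block_size :: "nat set option \<Rightarrow> nat" where
  "block_size k = (case k of None \<Rightarrow> d + 1 | Some C \<Rightarrow> card C)"

text \<open>Entry \<open>(i, j)\<close> of a block is the coefficient of the \<open>i\<close>-th basis vector in the image of
  the \<open>j\<close>-th one, read off as in \<open>nbhd_const_expansion\<close> and
  \<open>nbhd_balanced_expansion\<close>.\<close>
definition block_repr :: "('a, 'f::field) xmat \<Rightarrow> nat set option \<Rightarrow> nat \<Rightarrow> nat \<Rightarrow> 'f" where
  "block_repr M k i j = (case k of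
     None \<Rightarrow> if i \<le> d \<and> j \<le> d then xmat_apply X M (nbhd_ind j) (nbhd_rep i) else 0
   | Some C \<Rightarrow> if C \<in> classes \<and> i < card C \<and> j < card C
       then xmat_apply X M (nbhd_diff (class_enum C j)) (nbhd_fst (class_enum C i)) else 0)"

lemma block_repr_None:
  "block_repr M None i j = (if i \<le> d \<and> j \<le> d then xmat_apply X M (nbhd_ind j) (nbhd_rep i) else 0)"
  unfolding block_repr_def by simp

lemma block_repr_Some:
  "block_repr M (Some C) i j = (if C \<in> classes \<and> i < card C \<and> j < card C
     then xmat_apply X M (nbhd_diff (class_enum C j)) (nbhd_fst (class_enum C i)) else 0)"
  unfolding block_repr_def by simp

lemma block_repr_in_carrier: "block_repr M \<in> blocks_carrier block_index block_size"
  unfolding blocks_carrier_def block_index_def block_size_def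
  by (auto simp: block_repr_def split: option.splits if_splits)

lemma block_repr_add: "block_repr (\<lambda>y z. M y z + K y z) = (\<lambda>k i j. block_repr M k i j + block_repr K k i j)"
proof (intro ext)
  show "block_repr (\<lambda>y z. M y z + K y z) k i j = block_repr M k i j + block_repr K k i j" for k i j
    by (cases k) (simp_all add: block_repr_None block_repr_Some xmat_apply_add)
qed

lemma block_repr_smult: "block_repr (\<lambda>y z. c * M y z) = (\<lambda>k i j. c * block_repr M k i j)"
proof (intro ext)
  show "block_repr (\<lambda>y z. c * M y z) k i j = c * block_repr M k i j" for k i j
    by (cases k) (simp_all add: block_repr_None block_repr_Some xmat_apply_smult)
qed

lemma block_repr_lincomb:
  "block_repr (\<lambda>y z. \<Sum>t\<in>S. c t * F t y z) = (\<lambda>k i j. \<Sum>t\<in>S. c t * block_repr (F t) k i j)"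
proof (intro ext)
  fix k i j
  show "block_repr (\<lambda>y z. \<Sum>t\<in>S. c t * F t y z) k i j = (\<Sum>t\<in>S. c t * block_repr (F t) k i j)"
  proof (cases k)
    case None
    then show ?thesis
      by (cases "i \<le> d \<and> j \<le> d") (auto simp: block_repr_None xmat_apply_lincomb_mat)
  next
    case (Some C)
    then show ?thesis
      by (cases "C \<in> classes \<and> i < card C \<and> j < card C")
        (auto simp: block_repr_Some xmat_apply_lincomb_mat)
  qed
qed

lemma block_repr_mult_None:
  assumes "preserves_blocks K"
  shows "block_repr (xmat_mult X M K) None i j = blocks_mult block_size (block_repr M) (block_repr K) None i j"
proof (cases "i \<le> d \<and> j \<le> d")
  case True
  have "block_repr (xmat_mult X M K) None i j
      = (\<Sum>a\<le>d. xmat_apply X K (nbhd_ind j) (nbhd_rep a) * xmat_apply X M (nbhd_ind a) (nbhd_rep i))"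
    using True by (simp add: block_repr_None xmat_apply_mult_nbhd_ind[OF assms])
  also have "\<dots> = (\<Sum>l<d + 1. block_repr M None i l * block_repr K None l j)"
    using True by (simp add: block_repr_None lessThan_Suc_atMost mult.commute)
  finally show ?thesis
    unfolding blocks_mult_def block_size_def by simp
next
  case False
  then show ?thesis
    unfolding blocks_mult_def by (auto simp: block_repr_None)
qed

lemma block_repr_mult_Some:
  assumes "preserves_blocks K"
  shows "block_repr (xmat_mult X M K) (Some C) i j
    = blocks_mult block_size (block_repr M) (block_repr K) (Some C) i j"
proof (cases "C \<in> classes \<and> i < card C \<and> j < card C")
  case True
  let ?a = "class_enum C i" and ?c = "class_enum C j"
  let ?term = "\<lambda>e. xmat_apply X K (nbhd_diff ?c) (nbhd_fst e) * xmat_apply X M (nbhd_diff e) (nbhd_fst ?a)"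
  have C: "C \<in> classes" "C \<subseteq> A\<^sub>2" "?c \<in> C"
    using True class_subset class_enum_mem by auto
  have "block_repr (xmat_mult X M K) (Some C) i j = (\<Sum>e\<in>A\<^sub>2. ?term e)"
    using True C by (simp add: block_repr_Some xmat_apply_mult_nbhd_diff[OF assms, of ?c] subset_iff)
  also have "\<dots> = (\<Sum>e\<in>C. ?term e)"
  proof (rule sum.mono_neutral_right[OF finite_A2 C(2)])
    show "\<forall>e\<in>A\<^sub>2 - C. ?term e = 0"
    proof
      fix e assume e: "e \<in> A\<^sub>2 - C"
      then have "(e, ?c) \<notin> link_rel\<^sup>+"
        using class_closed[OF C(1,3)] link_trancl_sym by blast
      then show "?term e = 0"
        using assms e C unfolding preserves_blocks_def by auto
    qed
  qed
  also have "\<dots> = (\<Sum>l<card C. ?term (class_enum C l))"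
    using sum.reindex_bij_betw[OF class_enum_bij[OF C(1)], of ?term] by simp
  also have "\<dots> = (\<Sum>l<card C. block_repr M (Some C) i l * block_repr K (Some C) l j)"
    using True by (intro sum.cong) (simp_all add: block_repr_Some mult.commute)
  finally show ?thesis
    unfolding blocks_mult_def block_size_def by simp
next
  case False
  then show ?thesis
    unfolding blocks_mult_def by (auto simp: block_repr_Some)
qed

lemma block_repr_mult:
  assumes "preserves_blocks K"
  shows "block_repr (xmat_mult X M K) = blocks_mult block_size (block_repr M) (block_repr K)"
proof (intro ext)
  fix k i j
  show "block_repr (xmat_mult X M K) k i j = blocks_mult block_size (block_repr M) (block_repr K) k i j"
    using block_repr_mult_None[OF assms] block_repr_mult_Some[OF assms] by (cases k) auto
qed

lemma block_repr_one: "block_repr (xmat_one X :: ('a, 'f::field) xmat) = blocks_one block_index block_size"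
proof (intro ext)
  fix k i j
  have ind: "xmat_apply X (xmat_one X) (nbhd_ind j) = (nbhd_ind j :: 'a \<Rightarrow> 'f)" if "j \<le> d" for j
    by (rule xmat_apply_one[OF finite_X]) (rule nbhd_ind_outside[OF that])
  have diff: "xmat_apply X (xmat_one X) (nbhd_diff c) = (nbhd_diff c :: 'a \<Rightarrow> 'f)" if "c \<in> A\<^sub>2" for c
    using nbhd_balanced_nbhd_diff[OF that] unfolding nbhd_balanced_def
    by (intro xmat_apply_one[OF finite_X]) blast
  show "block_repr (xmat_one X) k i j = (blocks_one block_index block_size k i j :: 'f)"
  proof (cases k)
    case None
    then show ?thesis
      by (auto simp: block_repr_None blocks_one_def block_index_def block_size_def ind
          nbhd_ind_eq[OF _ _ nbhd_rep_mem])
  next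
    case (Some C)
    have "class_enum C i \<in> A\<^sub>2" "class_enum C j \<in> A\<^sub>2" if "C \<in> classes" "i < card C" "j < card C"
      using that class_enum_mem class_subset by blast+
    then show ?thesis
      using Some class_enum_eq_iff[of C i j]
      by (auto simp: block_repr_Some blocks_one_def block_index_def block_size_def diff nbhd_diff_at_fst)
  qed
qed

text \<open>This is where \<open>2 \<noteq> 0\<close> is needed: a matrix killing \<^term>\<open>nbhd_ind a\<close> also kills
  \<open>e\<^sub>y + e\<^sub>y\<^sub>'\<close> for \<open>x R\<^sub>a = {y, y'}\<close>, and one killing \<^term>\<open>nbhd_diff a\<close> kills \<open>e\<^sub>y - e\<^sub>y\<^sub>'\<close>.\<close>
lemma xmat_eq_zero_if_kills_basis:
  fixes D :: "('a, 'f::field) xmat"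
  assumes two: "(2::'f) \<noteq> 0" and supp: "xmat_supported X D"
    and ind: "\<And>a. a \<le> d \<Longrightarrow> xmat_apply X D (nbhd_ind a) = (\<lambda>y. 0)"
    and diff: "\<And>a. a \<in> A\<^sub>2 \<Longrightarrow> xmat_apply X D (nbhd_diff a) = (\<lambda>y. 0)"
  shows "D = (\<lambda>y z. 0)"
proof (intro ext)
  fix y w
  show "D y w = 0"
  proof (cases "w \<in> X")
    case False
    then show ?thesis
      using supp unfolding xmat_supported_def by blast
  next
    case True
    then obtain a where a: "a \<le> d" "w \<in> nbhd a"
      using nbhd_cover by blast
    have sum0: "(\<Sum>w\<in>nbhd a. D y w) = 0"
      using fun_cong[OF ind[OF a(1)], of y] by (simp add: xmat_apply_nbhd_ind[OF a(1)])
    show ?thesis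
    proof (cases "a \<in> A\<^sub>2")
      case False
      then obtain w' where "nbhd a = {w'}"
        using card_nbhd_cases[OF a(1)] card_1_singletonE by blast
      then show ?thesis
        using sum0 a(2) by simp
    next
      case True
      have "D y (nbhd_fst a) + D y (nbhd_snd a) = 0"
        using sum0 by (simp add: sum_nbhd_A2[OF True])
      moreover have "D y (nbhd_fst a) - D y (nbhd_snd a) = 0"
        using fun_cong[OF diff[OF True], of y] by (simp add: xmat_apply_nbhd_diff[OF True])
      ultimately have "2 * D y (nbhd_fst a) = 0" "2 * D y (nbhd_snd a) = 0"
        by (simp_all add: algebra_simps)
      then show ?thesis
        using two a(2) nbhd_eq_pair(1)[OF True] by auto
    qed
  qed
qed

lemma eq_zero_if_block_repr_eq_zero:
  fixes D :: "('a, 'f::field) xmat"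
  assumes two: "(2::'f) \<noteq> 0" and D: "preserves_blocks D" and zero: "block_repr D = (\<lambda>k i j. 0)"
  shows "D = (\<lambda>y z. 0)"
proof (rule xmat_eq_zero_if_kills_basis[OF two])
  show "xmat_supported X D"
    using D unfolding preserves_blocks_def by blast
  show "xmat_apply X D (nbhd_ind j) = (\<lambda>y. 0)" if "j \<le> d" for j
  proof -
    have "xmat_apply X D (nbhd_ind j) (nbhd_rep a) = 0" if "a \<le> d" for a
      using fun_cong[OF fun_cong[OF fun_cong[OF zero, of None], of a], of j] that \<open>j \<le> d\<close>
      by (simp add: block_repr_None)
    moreover have "nbhd_const (xmat_apply X D (nbhd_ind j))"
      using D that unfolding preserves_blocks_def by blast
    ultimately show ?thesis
      by (subst nbhd_const_expansion) simp_all
  qed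
  show "xmat_apply X D (nbhd_diff c) = (\<lambda>y. 0)" if "c \<in> A\<^sub>2" for c
  proof -
    have "xmat_apply X D (nbhd_diff c) (nbhd_fst e) = 0" if "e \<in> A\<^sub>2" for e
    proof (cases "(e, c) \<in> link_rel\<^sup>+")
      case True
      then obtain C where C: "C \<in> classes" "e \<in> C" "c \<in> C"
        by (rule trancl_in_class)
      obtain i where "i < card C" "class_enum C i = e"
        using class_enum_surj[OF C(1,2)] .
      moreover obtain j where "j < card C" "class_enum C j = c"
        using class_enum_surj[OF C(1,3)] .
      ultimately show ?thesis
        using fun_cong[OF fun_cong[OF fun_cong[OF zero, of "Some C"], of i], of j] C(1)
        by (simp add: block_repr_Some)
    next
      case False
      then show ?thesis
        using D \<open>c \<in> A\<^sub>2\<close> that unfolding preserves_blocks_def by blast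
    qed
    moreover have "nbhd_balanced (xmat_apply X D (nbhd_diff c))"
      using D that unfolding preserves_blocks_def by blast
    ultimately show ?thesis
      by (subst nbhd_balanced_expansion) simp_all
  qed
qed

lemma inj_on_block_repr:
  assumes "(2::'f::field) \<noteq> 0"
  shows "inj_on block_repr (terwilliger_alg X d R x :: ('a, 'f) xmat set)"
  unfolding terwilliger_alg_def
  by (rule inj_on_gen_alg[OF block_repr_add block_repr_smult])
    (rule eq_zero_if_block_repr_eq_zero[OF assms preserves_blocks_terwilliger],
      simp_all add: terwilliger_alg_def)

section \<open>Matrix units in the Terwilliger algebra\<close>

abbreviation T :: "('a, 'f::field) xmat set" where
  "T \<equiv> terwilliger_alg X d R x"

lemma adj_mat_in_T: "b \<le> d \<Longrightarrow> adj_mat R b \<in> T"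
  unfolding terwilliger_alg_def by (rule gen_alg.gen) blast

lemma dual_idem_in_T: "a \<le> d \<Longrightarrow> dual_idem R x a \<in> T"
  unfolding terwilliger_alg_def by (rule gen_alg.gen) blast

lemma add_in_T: "M \<in> T \<Longrightarrow> K \<in> T \<Longrightarrow> (\<lambda>y z. M y z + K y z) \<in> T"
  unfolding terwilliger_alg_def by (rule gen_alg.add)

lemma smult_in_T: "M \<in> T \<Longrightarrow> (\<lambda>y z. c * M y z) \<in> T"
  unfolding terwilliger_alg_def by (rule gen_alg.smult)

lemma mult_in_T: "M \<in> T \<Longrightarrow> K \<in> T \<Longrightarrow> xmat_mult X M K \<in> T"
  unfolding terwilliger_alg_def by (rule gen_alg.mult)

lemma lincomb_in_T: "finite S \<Longrightarrow> (\<And>t. t \<in> S \<Longrightarrow> F t \<in> T) \<Longrightarrow> (\<lambda>y z. \<Sum>t\<in>S. c t * F t y z) \<in> T"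
  unfolding terwilliger_alg_def by (rule gen_alg_lincomb)

definition all_ones :: "('a, 'f::field) xmat" where
  "all_ones = (\<lambda>y z. \<Sum>b\<le>d. adj_mat R b y z)"

lemma all_ones_in_T: "all_ones \<in> T"
proof -
  have "(\<lambda>y z. \<Sum>b\<le>d. 1 * adj_mat R b y z) \<in> T"
    unfolding terwilliger_alg_def
    using adj_mat_in_T unfolding terwilliger_alg_def by (intro gen_alg_lincomb) auto
  then show ?thesis
    unfolding all_ones_def by simp
qed

lemma all_ones_eq: "y \<in> X \<Longrightarrow> w \<in> X \<Longrightarrow> all_ones y w = (1::'f::field)"
proof -
  assume "y \<in> X" "w \<in> X"
  then obtain b0 where b0: "b0 \<le> d" "(y, w) \<in> R b0"
    using R_cover by blast
  have "adj_mat R b y w = (if b = b0 then 1 else (0::'f))" if "b \<le> d" for b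
  proof (cases "b = b0")
    case False
    then have "(y, w) \<notin> R b"
      using R_unique[OF that b0(1) _ b0(2)] by blast
    then show ?thesis
      using False unfolding adj_mat_def by simp
  qed (simp add: adj_mat_def b0(2))
  then have "(\<Sum>b\<le>d. adj_mat R b y w) = (\<Sum>b\<le>d. if b = b0 then 1 else (0::'f))"
    by (intro sum.cong) simp_all
  then show "all_ones y w = (1::'f)"
    unfolding all_ones_def using b0(1) by simp
qed

definition sandwich :: "nat \<Rightarrow> ('a, 'f::field) xmat \<Rightarrow> nat \<Rightarrow> ('a, 'f) xmat" where
  "sandwich a M c = xmat_mult X (xmat_mult X (dual_idem R x a) M) (dual_idem R x c)"

lemma sandwich_in_T: "a \<le> d \<Longrightarrow> c \<le> d \<Longrightarrow> M \<in> T \<Longrightarrow> sandwich a M c \<in> T"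
  unfolding sandwich_def by (intro mult_in_T dual_idem_in_T)

lemma xmat_apply_sandwich:
  assumes "a \<le> d" "c \<le> d"
  shows "xmat_apply X (sandwich a M c) f y = (if y \<in> nbhd a then \<Sum>w\<in>nbhd c. M y w * f w else 0)"
proof -
  have "xmat_apply X M (xmat_apply X (dual_idem R x c) f) y = (\<Sum>w\<in>nbhd c. M y w * f w)"
    unfolding xmat_apply_def[of X M] xmat_apply_dual_idem[OF assms(2)]
    using nbhd_subset[OF assms(2)] finite_X by (simp add: if_distrib[of "(*) _"] sum.If_cases Int_absorb1)
  then show ?thesis
    unfolding sandwich_def xmat_apply_mult xmat_apply_dual_idem[OF assms(1)] by simp
qed

definition primary_unit :: "nat \<Rightarrow> nat \<Rightarrow> ('a, 'f::field) xmat" where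
  "primary_unit i j = (\<lambda>y z. (1 / of_nat (card (nbhd j))) * sandwich i all_ones j y z)"

lemma primary_unit_in_T: "i \<le> d \<Longrightarrow> j \<le> d \<Longrightarrow> primary_unit i j \<in> T"
  unfolding primary_unit_def by (intro smult_in_T sandwich_in_T all_ones_in_T)

lemma xmat_apply_primary_unit:
  assumes "i \<le> d" "j \<le> d"
  shows "xmat_apply X (primary_unit i j) f y
    = (if y \<in> nbhd i then (\<Sum>w\<in>nbhd j. f w) / of_nat (card (nbhd j)) else 0)"
  using nbhd_subset[OF assms(1)] nbhd_subset[OF assms(2)]
  unfolding primary_unit_def xmat_apply_smult xmat_apply_sandwich[OF assms]
  by (auto simp: all_ones_eq subset_iff cong: sum.cong)

lemma block_repr_primary_unit:
  assumes two: "(2::'f::field) \<noteq> 0" and "i \<le> d" "j \<le> d"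
  shows "block_repr (primary_unit i j :: ('a, 'f) xmat) = block_unit (None, i, j)"
proof (intro ext)
  fix k i' j'
  have "card (nbhd j) = 1 \<or> card (nbhd j) = 2"
    using card_nbhd_cases[OF assms(3)] mem_A2_iff by blast
  then have card_nz: "(of_nat (card (nbhd j)) :: 'f) \<noteq> 0"
    using two by auto
  have rep: "nbhd_rep i' \<in> nbhd i \<longleftrightarrow> i' = i" if "i' \<le> d" for i'
    using nbhd_rep_mem[OF that] nbhd_unique[OF that assms(2)] nbhd_rep_mem[OF assms(2)] by blast
  show "block_repr (primary_unit i j :: ('a, 'f) xmat) k i' j' = block_unit (None, i, j) k i' j'"
  proof (cases k)
    case None
    then show ?thesis
      using card_nz rep assms(2,3)
      by (auto simp: block_repr_None block_unit_def xmat_apply_primary_unit[OF assms(2,3)]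
          sum_nbhd_ind[OF assms(3)])
  next
    case (Some C)
    have "class_enum C j' \<in> A\<^sub>2" if "C \<in> classes" "j' < card C"
      using class_enum_mem[OF that] class_subset[OF that(1)] by blast
    then show ?thesis
      using Some by (auto simp: block_repr_Some block_unit_def xmat_apply_primary_unit[OF assms(2,3)]
          sum_nbhd_diff[OF _ assms(3)])
  qed
qed

definition transports :: "'f::field \<Rightarrow> nat \<Rightarrow> nat \<Rightarrow> ('a, 'f) xmat \<Rightarrow> bool" where
  "transports s a c M \<longleftrightarrow> a \<in> A\<^sub>2 \<and> c \<in> A\<^sub>2 \<and> M \<in> T \<and> (\<forall>l\<le>d. xmat_apply X M (nbhd_ind l) = (\<lambda>y. 0)) \<and>
     (\<forall>e\<in>A\<^sub>2. xmat_apply X M (nbhd_diff e) = (if e = c then (\<lambda>y. s * nbhd_diff a y) else (\<lambda>y. 0)))"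

lemma transports_mult:
  assumes M: "transports s a c M" and K: "transports t c e K"
  shows "transports (s * t) a e (xmat_mult X M K)"
  unfolding transports_def
proof (intro conjI allI impI ballI)
  show "a \<in> A\<^sub>2" "e \<in> A\<^sub>2"
    using assms unfolding transports_def by blast+
  show "xmat_mult X M K \<in> T"
    using assms unfolding transports_def by (blast intro: mult_in_T)
  show "xmat_apply X (xmat_mult X M K) (nbhd_ind l) = (\<lambda>y. 0)" if "l \<le> d" for l
    using K that unfolding transports_def by (simp add: xmat_apply_mult xmat_apply_zero)
  show "xmat_apply X (xmat_mult X M K) (nbhd_diff e') =
      (if e' = e then (\<lambda>y. s * t * nbhd_diff a y) else (\<lambda>y. 0))" if "e' \<in> A\<^sub>2" for e'
  proof (cases "e' = e")
    case True
    have "c \<in> A\<^sub>2"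
      using K unfolding transports_def by blast
    then show ?thesis
      using True M K that unfolding transports_def
      by (simp add: xmat_apply_mult xmat_apply_scale mult_ac)
  next
    case False
    then show ?thesis
      using K that unfolding transports_def by (simp add: xmat_apply_mult xmat_apply_zero)
  qed
qed

lemma transports_normalize:
  assumes "transports s a c M" "s \<noteq> 0"
  shows "transports 1 a c (\<lambda>y z. (1 / s) * M y z)"
  using assms smult_in_T[of M "1 / s"] unfolding transports_def xmat_apply_smult by auto

definition link_mat :: "nat \<Rightarrow> nat \<Rightarrow> nat \<Rightarrow> ('a, 'f::field) xmat" where
  "link_mat a b c = (\<lambda>y z. sandwich a (adj_mat R b) c y z + (- 1 / 2) * sandwich a all_ones c y z)"

lemma link_mat_in_T: "a \<le> d \<Longrightarrow> b \<le> d \<Longrightarrow> c \<le> d \<Longrightarrow> link_mat a b c \<in> T"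
  unfolding link_mat_def by (intro add_in_T smult_in_T sandwich_in_T adj_mat_in_T all_ones_in_T)

lemma xmat_apply_link_mat:
  fixes f :: "'a \<Rightarrow> 'f::field"
  assumes "a \<le> d" "c \<le> d"
  shows "xmat_apply X (link_mat a b c) f y = (if y \<in> nbhd a
    then (\<Sum>w\<in>nbhd c. if (y, w) \<in> R b then f w else 0) - (\<Sum>w\<in>nbhd c. f w) / 2 else 0)"
proof -
  have "all_ones y w = (1::'f)" if "y \<in> nbhd a" "w \<in> nbhd c" for w
    using all_ones_eq nbhd_subset assms that by blast
  then show ?thesis
    unfolding link_mat_def xmat_apply_add xmat_apply_smult xmat_apply_sandwich[OF assms]
    by (simp add: adj_mat_def if_distrib[of "\<lambda>u. u * _"] cong: sum.cong)
qed

text \<open>For \<open>p\<^sub>a\<^sub>b\<^sup>c = 1\<close> the relation \<open>R\<^sub>b\<close> restricted to \<open>x R\<^sub>a \<times> x R\<^sub>c\<close> is a perfect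
  matching, determined by whether it pairs the two first elements.\<close>
lemma int_num_eq_1_matching:
  assumes "a \<in> A\<^sub>2" "c \<in> A\<^sub>2" "b \<le> d" "int_num X R a b c = 1"
  shows "(nbhd_fst a, nbhd_snd c) \<in> R b \<longleftrightarrow> (nbhd_fst a, nbhd_fst c) \<notin> R b"
    and "(nbhd_snd a, nbhd_fst c) \<in> R b \<longleftrightarrow> (nbhd_fst a, nbhd_fst c) \<notin> R b"
    and "(nbhd_snd a, nbhd_snd c) \<in> R b \<longleftrightarrow> (nbhd_fst a, nbhd_fst c) \<in> R b"
proof -
  let ?P = "\<lambda>y z. (y, z) \<in> R b"
  have "card {z \<in> nbhd c. ?P (nbhd_fst a) z} = 1"
    using card_nbhd_row_A2[OF assms(1-3) nbhd_fst_mem[OF assms(1)]] assms(4) by simp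
  then have row: "of_bool (?P (nbhd_fst a) (nbhd_fst c)) + of_bool (?P (nbhd_fst a) (nbhd_snd c)) = (1::nat)"
    by (simp only: card_nbhd_A2_filter[OF assms(2)])
  have col: "of_bool (?P (nbhd_fst a) z) + of_bool (?P (nbhd_snd a) z) = (1::nat)" if "z \<in> nbhd c" for z
  proof -
    have "card {y \<in> nbhd a. ?P y z} = 1"
      using card_nbhd_col[OF A2_le[OF assms(1)] assms(3) A2_le[OF assms(2)] that] assms(4) by simp
    then show ?thesis
      by (simp only: card_nbhd_A2_filter[OF assms(1)])
  qed
  have exactly_one: "q \<longleftrightarrow> \<not> p" if "of_bool p + of_bool q = (1::nat)" for p q
    using that by (cases p; cases q) simp_all
  show "?P (nbhd_fst a) (nbhd_snd c) \<longleftrightarrow> \<not> ?P (nbhd_fst a) (nbhd_fst c)"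
    using exactly_one[OF row] .
  show "?P (nbhd_snd a) (nbhd_fst c) \<longleftrightarrow> \<not> ?P (nbhd_fst a) (nbhd_fst c)"
    using exactly_one[OF col[OF nbhd_fst_mem[OF assms(2)]]] .
  show "?P (nbhd_snd a) (nbhd_snd c) \<longleftrightarrow> ?P (nbhd_fst a) (nbhd_fst c)"
    using exactly_one[OF row] exactly_one[OF col[OF nbhd_snd_mem[OF assms(2)]]] by blast
qed

text \<open>The correction term \<open>-(1/2) E\<^sub>a\<^sup>* J E\<^sub>c\<^sup>*\<close> in \<^const>\<open>link_mat\<close> cancels the image
  \<^term>\<open>nbhd_ind a\<close> of \<^term>\<open>nbhd_ind c\<close> under \<open>E\<^sub>a\<^sup>* A\<^sub>b E\<^sub>c\<^sup>*\<close>.\<close>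
lemma xmat_apply_link_mat_nbhd_ind:
  assumes two: "(2::'f::field) \<noteq> 0"
    and abc: "a \<in> A\<^sub>2" "c \<in> A\<^sub>2" "b \<le> d" "int_num X R a b c = 1" and "l \<le> d"
  shows "xmat_apply X (link_mat a b c :: ('a, 'f) xmat) (nbhd_ind l) = (\<lambda>y. 0)"
proof
  fix y
  have cd: "c \<le> d"
    using abc(2) A2_le by blast
  have "(\<Sum>w\<in>nbhd c. if (y, w) \<in> R b then nbhd_ind l w else 0)
      = (\<Sum>w\<in>nbhd c. if (y, w) \<in> R b then (if l = c then 1 else 0) else (0::'f))"
    by (rule sum.cong) (simp_all add: nbhd_ind_eq[OF cd \<open>l \<le> d\<close>])
  also have "\<dots> = of_bool (l = c) * of_nat (card {w \<in> nbhd c. (y, w) \<in> R b})"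
    by (cases "l = c") (simp_all add: sum_if_eq_card[OF finite_nbhd[OF cd]])
  finally have row: "(\<Sum>w\<in>nbhd c. if (y, w) \<in> R b then nbhd_ind l w else 0)
      = of_bool (l = c) * (of_nat (card {w \<in> nbhd c. (y, w) \<in> R b}) :: 'f)" .
  have "card {w \<in> nbhd c. (y, w) \<in> R b} = 1" if "y \<in> nbhd a"
    using card_nbhd_row_A2[OF abc(1-3) that] abc(4) by simp
  with row show "xmat_apply X (link_mat a b c) (nbhd_ind l) y = (0::'f)"
    using two abc(2) mem_A2_iff A2_le[OF abc(1)]
    by (simp add: xmat_apply_link_mat[OF _ cd] sum_nbhd_ind[OF cd \<open>l \<le> d\<close>])
qed

definition link_sign :: "nat \<Rightarrow> nat \<Rightarrow> nat \<Rightarrow> 'f::field" where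
  "link_sign a b c = (if (nbhd_fst a, nbhd_fst c) \<in> R b then 1 else - 1)"

lemma xmat_apply_link_mat_nbhd_diff:
  assumes abc: "a \<in> A\<^sub>2" "c \<in> A\<^sub>2" "b \<le> d" "int_num X R a b c = 1"
  shows "xmat_apply X (link_mat a b c) (nbhd_diff c) = (\<lambda>y. link_sign a b c * nbhd_diff a y)"
proof
  fix y
  have ad: "a \<le> d" and cd: "c \<le> d"
    using abc A2_le by auto
  show "xmat_apply X (link_mat a b c) (nbhd_diff c) y = link_sign a b c * nbhd_diff a y"
  proof (cases "y \<in> nbhd a")
    case False
    then show ?thesis
      by (simp add: xmat_apply_link_mat[OF ad cd] nbhd_diff_outside[OF abc(1)])
  next
    case True
    then have "y = nbhd_fst a \<or> y = nbhd_snd a"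
      using nbhd_eq_pair(1)[OF abc(1)] by blast
    then show ?thesis
      using True int_num_eq_1_matching[OF abc] nbhd_eq_pair(2)[OF abc(1)]
      by (auto simp: xmat_apply_link_mat[OF ad cd] sum_nbhd_A2[OF abc(2)] sum_nbhd_diff[OF abc(2) cd]
          nbhd_diff_fst nbhd_diff_snd abc link_sign_def)
  qed
qed

lemma xmat_apply_link_mat_nbhd_diff_other:
  assumes "a \<le> d" "c \<le> d" "e \<in> A\<^sub>2" "e \<noteq> c"
  shows "xmat_apply X (link_mat a b c :: ('a, 'f::field) xmat) (nbhd_diff e) = (\<lambda>y. 0)"
proof -
  have vanish: "nbhd_diff e w = (0::'f)" if "w \<in> nbhd c" for w
    using nbhd_diff_other[OF assms(3,2) that] assms(4) by simp
  have "(\<Sum>w\<in>nbhd c. if (y, w) \<in> R b then nbhd_diff e w else 0) = (0::'f)" for y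
    by (rule sum.neutral) (simp add: vanish)
  moreover have "(\<Sum>w\<in>nbhd c. nbhd_diff e w) = (0::'f)"
    by (rule sum.neutral) (simp add: vanish)
  ultimately show ?thesis
    by (simp add: xmat_apply_link_mat[OF assms(1,2)] fun_eq_iff)
qed

lemma transports_link_mat:
  assumes two: "(2::'f::field) \<noteq> 0"
    and abc: "a \<in> A\<^sub>2" "c \<in> A\<^sub>2" "b \<le> d" "int_num X R a b c = 1"
  shows "transports (link_sign a b c) a c (link_mat a b c :: ('a, 'f) xmat)"
  unfolding transports_def
  using abc link_mat_in_T A2_le xmat_apply_link_mat_nbhd_ind[OF two abc]
    xmat_apply_link_mat_nbhd_diff[OF abc] xmat_apply_link_mat_nbhd_diff_other[OF A2_le A2_le]
  by auto

lemma transports_if_trancl: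
  assumes two: "(2::'f::field) \<noteq> 0" and ac: "(a, c) \<in> link_rel\<^sup>+"
  shows "\<exists>s (M :: ('a, 'f) xmat). s \<noteq> 0 \<and> transports s a c M"
  using ac
proof (induction rule: trancl_induct)
  case (base c)
  then obtain b where "a \<in> A\<^sub>2" "c \<in> A\<^sub>2" "b \<le> d" "int_num X R a b c = 1"
    unfolding link_rel_def linked_def by blast
  from transports_link_mat[OF two this]
  show ?case
    by (intro exI conjI) (auto simp: link_sign_def)
next
  case (step c e)
  obtain s M where M: "s \<noteq> 0" "transports s a c (M :: ('a, 'f) xmat)"
    using step.IH by blast
  obtain b where "c \<in> A\<^sub>2" "e \<in> A\<^sub>2" "b \<le> d" "int_num X R c b e = 1"
    using step.hyps(2) unfolding link_rel_def linked_def by blast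
  from transports_mult[OF M(2) transports_link_mat[OF two this]]
  show ?case
    using M(1) by (intro exI conjI) (auto simp: link_sign_def)
qed

lemma block_repr_transports:
  assumes M: "transports 1 a c M" and C: "C \<in> classes" "i < card C" "j < card C"
    and enum: "class_enum C i = a" "class_enum C j = c"
  shows "block_repr M = block_unit (Some C, i, j)"
proof (intro ext)
  fix k i' j'
  show "block_repr M k i' j' = block_unit (Some C, i, j) k i' j'"
  proof (cases k)
    case None
    then show ?thesis
      using M unfolding transports_def by (auto simp: block_repr_None block_unit_def)
  next
    case (Some C')
    show ?thesis
    proof (cases "C' \<in> classes \<and> i' < card C' \<and> j' < card C'")
      case True
      then have "class_enum C' i' \<in> A\<^sub>2" "class_enum C' j' \<in> A\<^sub>2"
        using class_enum_mem class_subset by blast+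
      moreover have "class_enum C' j' = c \<and> class_enum C' i' = a \<longleftrightarrow> C' = C \<and> i' = i \<and> j' = j"
        using class_unique[OF C(1)] class_enum_mem class_enum_eq_iff True C enum by metis
      ultimately show ?thesis
        using Some True M unfolding transports_def
        by (auto simp: block_repr_Some block_unit_def nbhd_diff_at_fst)
    next
      case False
      then show ?thesis
        using Some C by (auto simp: block_repr_Some block_unit_def)
    qed
  qed
qed

lemma block_unit_in_image:
  assumes two: "(2::'f::field) \<noteq> 0" and t: "t \<in> block_positions block_index block_size"
  shows "block_unit t \<in> block_repr ` (T :: ('a, 'f) xmat set)"
proof -
  obtain k i j where kij: "t = (k, i, j)" "k \<in> block_index" "i < block_size k" "j < block_size k"
    using t unfolding block_positions_def by auto
  show ?thesis
  proof (cases k)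
    case None
    then have "i \<le> d" "j \<le> d"
      using kij unfolding block_size_def by auto
    then have "block_unit t = block_repr (primary_unit i j :: ('a, 'f) xmat)" "primary_unit i j \<in> T"
      using block_repr_primary_unit[OF two] primary_unit_in_T kij(1) None by simp_all
    then show ?thesis
      by (rule image_eqI)
  next
    case (Some C)
    then have C: "C \<in> classes" "i < card C" "j < card C"
      using kij unfolding block_index_def block_size_def by auto
    then have "(class_enum C i, class_enum C j) \<in> link_rel\<^sup>+"
      using class_trancl class_enum_mem by blast
    then obtain s and M :: "('a, 'f) xmat" where "transports s (class_enum C i) (class_enum C j) M" "s \<noteq> 0"
      using transports_if_trancl[OF two] by blast
    then have M: "transports 1 (class_enum C i) (class_enum C j) (\<lambda>y z. (1 / s) * M y z)"
      by (rule transports_normalize)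
    then have "(\<lambda>y z. (1 / s) * M y z) \<in> T"
      unfolding transports_def by blast
    moreover have "block_unit t = block_repr (\<lambda>y z. (1 / s) * M y z)"
      using block_repr_transports[OF M C refl refl] kij(1) Some by simp
    ultimately show ?thesis
      by (intro image_eqI)
  qed
qed

lemma block_repr_image:
  assumes "(2::'f::field) \<noteq> 0"
  shows "block_repr ` (T :: ('a, 'f) xmat set) = blocks_carrier block_index block_size"
proof
  show "block_repr ` T \<subseteq> blocks_carrier block_index block_size"
    using block_repr_in_carrier by blast
  have "finite block_index"
    unfolding block_index_def using finite_classes by simp
  then show "blocks_carrier block_index block_size \<subseteq> block_repr ` (T :: ('a, 'f) xmat set)"
    by (rule blocks_carrier_subset_image[OF _ block_unit_in_image[OF assms]])
      (simp_all add: block_repr_lincomb lincomb_in_T)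
qed

lemma alg_iso_block_repr:
  assumes "(2::'f::field) \<noteq> 0"
  shows "alg_iso X (T :: ('a, 'f) xmat set) block_index block_size block_repr"
  unfolding alg_iso_def bij_betw_def
proof (intro conjI ballI allI)
  show "inj_on block_repr (T :: ('a, 'f) xmat set)"
    using inj_on_block_repr[OF assms] .
  show "block_repr ` (T :: ('a, 'f) xmat set) = blocks_carrier block_index block_size"
    using block_repr_image[OF assms] .
  show "block_repr (xmat_mult X M K) = blocks_mult block_size (block_repr M) (block_repr K)"
    if "K \<in> (T :: ('a, 'f) xmat set)" for M K
    using block_repr_mult[OF preserves_blocks_terwilliger[OF that]] .
qed (simp_all add: block_repr_add block_repr_smult block_repr_one)

end

text \<open>Of the hypotheses on \<open>\<bbbF>\<close> and \<open>S\<close>, only \<open>2 \<noteq> 0\<close> is used: the block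
  decomposition exists over every field of characteristic not two, and for \<open>A\<^sub>2 = {}\<close>
  it degenerates to the primary block alone.\<close>
theorem corollary7p16:
  fixes X :: "'a set" and d :: nat and R :: "nat \<Rightarrow> ('a \<times> 'a) set" and x :: 'a
  assumes "alg_closed_field TYPE('f::field)"
    and "(2::'f) \<noteq> 0"
    and "is_scheme X d R"
    and "quasi_thin X d R"
    and "A2 X d R \<noteq> {}"
    and "x \<in> X"
  shows "equiv (A2 X d R) (sim_rel X d R) \<and>
    (let I = insert None (Some ` (A2 X d R // sim_rel X d R));
         n = (\<lambda>k. case k of None \<Rightarrow> d + 1 | Some C \<Rightarrow> card C)
     in \<exists>\<phi>. alg_iso X (terwilliger_alg X d R x :: ('a, 'f) xmat set) I n \<phi>)"
proof -
  interpret quasi_thin_scheme X d R x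
    using assms(3,4,6) by unfold_locales
  have "alg_iso X (T :: ('a, 'f) xmat set) block_index
      (\<lambda>k. case k of None \<Rightarrow> d + 1 | Some C \<Rightarrow> card C) block_repr"
    using alg_iso_block_repr[OF assms(2)] unfolding block_size_def .
  then show ?thesis
    unfolding sim_rel_eq_link_trancl Let_def block_index_def[symmetric]
    using equiv_link_trancl by blast
qed

end
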